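(* In the setting of the context, assume that $\hat p^D$ is bounded away from zero and infinity on $D$. Let $(\hat{\mathbf{f}}_j)$ be a solution of the SBF system satisfying the SBF constraints and $(\hat{\mathbf{f}}^{[r]}_j)$ the SBF algorithm iterates. Then (i) there exist $\tilde c_2>0$, $\tilde\varrho_2\in(0,1)$ such that $\int_{D_j}\|\hat{\mathbf{f}}^{[r]}_j(x_j)\ominus\hat{\mathbf{f}}_j(x_j)\|^2dx_j\le\tilde c_2\tilde\varrho_2^r$ for all $1\le j\le d$, $r\ge0$; (ii) $\|\hat{\mathbf{f}}^{[r]}_j(x_j)\ominus\hat{\mathbf{f}}_j(x_j)\|\to0$ for Lebesgue-a.e. $x_j\in D_j$, for all $j$; (iii) for each $j$ and $\varepsilon>0$ there is a Borel $S_j(\varepsilon)\subset D_j$ with Lebesgue measure of $D_j\setminus S_j(\varepsilon)$ less than $\varepsilon$ and $\sup_{x_j\in S_j(\varepsilon)}\|\hat{\mathbf{f}}^{[r]}_j(x_j)\ominus\hat{\mathbf{f}}_j(x_j)\|\to0$ as $r\to\infty$.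
   Context: $\mathbb{H}$ separable real Hilbert space ($\oplus,\odot,\ominus,\mathbf{0},\|\cdot\|$; Bochner integrals). Compact $D_j\subset\mathbb{R}^{L_j}$, $D=\prod D_j$. Data $(\tilde\xi^i,\tilde{\mathbf{Y}}^i)$, $i\le n$; bandwidths $h_j>0$; continuous $K_j\ge0$, positive on $[0,1)$, zero on $[1,\infty)$; $K_{h_j}(x_j,u_j)=h_j^{-L_j}K_j(\|x_j-u_j\|_j/h_j)/\int_{D_j}h_j^{-L_j}K_j(\|t_j-u_j\|_j/h_j)dt_j$ (or $|D_j|^{-1}$ if the denominator vanishes). $\hat p_0^D=n^{-1}\sum_iI(\tilde\xi^i\in D)>0$; $\hat{\mathbf{f}}_0=(\hat p_0^Dn)^{-1}\odot\bigoplus_i\tilde{\mathbf{Y}}^i\odot I(\tilde\xi^i\in D)$; $\hat p^D(\mathbf{x})=(\hat p_0^Dn)^{-1}\sum_i\prod_jK_{h_j}(x_j,\tilde\xi^i_j)I(\tilde\xi^i\in D)$; $\hat p^D_j$, $\hat p^D_{jk}$ the same with only the $j$ (resp. $j,k$) factors; $\hat{\mathbf{m}}_j(x_j)=(\hat p^D_j(x_j)\hat p_0^Dn)^{-1}\odot\bigoplus_i\tilde{\mathbf{Y}}^i\odot(K_{h_j}(x_j,\tilde\xi^i_j)I(\tilde\xi^i\in D))$. SBF system: $\hat{\mathbf{f}}_j(x_j)=\hat{\mathbf{m}}_j(x_j)\ominus\hat{\mathbf{f}}_0\ominus\bigoplus_{k\ne j}\int_{D_k}\hat{\mathbf{f}}_k(x_k)\odot\frac{\hat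 p^D_{jk}(x_j,x_k)}{\hat p^D_j(x_j)}dx_k$; constraints $\int_{D_j}\hat{\mathbf{f}}_j\odot\hat p^D_j=\mathbf{0}$, $\int\|\hat{\mathbf{f}}_j\|^2\hat p^D_j<\infty$. SBF algorithm: initial $(\hat{\mathbf{f}}^{[0]}_j)$ satisfying the constraints; for $r\ge1$, $j=1,\dots,d$: $\hat{\mathbf{f}}^{[r]}_j=\hat{\mathbf{m}}_j\ominus\hat{\mathbf{f}}_0\ominus\bigoplus_{k<j}\int\hat{\mathbf{f}}^{[r]}_k\odot\frac{\hat p^D_{jk}}{\hat p^D_j}dx_k\ominus\bigoplus_{k>j}\int\hat{\mathbf{f}}^{[r-1]}_k\odot\frac{\hat p^D_{jk}}{\hat p^D_j}dx_k$. *)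

theory Defs
  imports "HOL-Analysis.Analysis"
begin

text \<open>Points of R^{L_j} are represented as extensional functions nat => real
  supported on {..<L j}; Lebesgue measure on R^{L_j} is the product of lborel.\<close>

definition lebL :: "(nat \<Rightarrow> nat) \<Rightarrow> nat \<Rightarrow> (nat \<Rightarrow> real) measure" where
  "lebL L j = PiM {..<L j} (\<lambda>_. lborel)"

definition distL :: "(nat \<Rightarrow> nat) \<Rightarrow> nat \<Rightarrow> (nat \<Rightarrow> real) \<Rightarrow> (nat \<Rightarrow> real) \<Rightarrow> real" where
  "distL L j x u = sqrt (\<Sum>i<L j. (x i - u i)\<^sup>2)"

definition sbf_Kh :: "(nat \<Rightarrow> nat) \<Rightarrow> (nat \<Rightarrow> (nat \<Rightarrow> real) set) \<Rightarrow> (nat \<Rightarrow> real)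
    \<Rightarrow> (nat \<Rightarrow> real \<Rightarrow> real) \<Rightarrow> nat \<Rightarrow> (nat \<Rightarrow> real) \<Rightarrow> (nat \<Rightarrow> real) \<Rightarrow> real" where
  "sbf_Kh L D h K j x u =
     (let g = (\<lambda>t. K j (distL L j t u / h j) / h j ^ L j);
          den = (LINT t : D j | lebL L j. g t)
      in if den = 0 then 1 / measure (lebL L j) (D j) else g x / den)"

definition sbf_inD :: "nat \<Rightarrow> (nat \<Rightarrow> (nat \<Rightarrow> real) set) \<Rightarrow> (nat \<Rightarrow> nat \<Rightarrow> nat \<Rightarrow> real) \<Rightarrow> nat \<Rightarrow> bool" where
  "sbf_inD d D \<xi> i = (\<forall>j\<in>{1..d}. \<xi> i j \<in> D j)"

definition sbf_p0 :: "nat \<Rightarrow> nat \<Rightarrow> (nat \<Rightarrow> (nat \<Rightarrow> real) set) \<Rightarrow> (nat \<Rightarrow> nat \<Rightarrow> nat \<Rightarrow> real) \<Rightarrow> real" where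
  "sbf_p0 d n D \<xi> = (\<Sum>i<n. of_bool (sbf_inD d D \<xi> i)) / real n"

definition sbf_f0 :: "nat \<Rightarrow> nat \<Rightarrow> (nat \<Rightarrow> (nat \<Rightarrow> real) set) \<Rightarrow> (nat \<Rightarrow> nat \<Rightarrow> nat \<Rightarrow> real)
    \<Rightarrow> (nat \<Rightarrow> 'h::real_vector) \<Rightarrow> 'h" where
  "sbf_f0 d n D \<xi> Y = inverse (sbf_p0 d n D \<xi> * real n) *\<^sub>R
      (\<Sum>i<n. of_bool (sbf_inD d D \<xi> i) *\<^sub>R Y i)"

definition sbf_p :: "(nat \<Rightarrow> nat) \<Rightarrow> (nat \<Rightarrow> (nat \<Rightarrow> real) set) \<Rightarrow> (nat \<Rightarrow> real) \<Rightarrow> (nat \<Rightarrow> real \<Rightarrow> real)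
    \<Rightarrow> nat \<Rightarrow> nat \<Rightarrow> (nat \<Rightarrow> nat \<Rightarrow> nat \<Rightarrow> real) \<Rightarrow> (nat \<Rightarrow> nat \<Rightarrow> real) \<Rightarrow> real" where
  "sbf_p L D h K d n \<xi> x = inverse (sbf_p0 d n D \<xi> * real n) *
      (\<Sum>i<n. (\<Prod>j\<in>{1..d}. sbf_Kh L D h K j (x j) (\<xi> i j)) * of_bool (sbf_inD d D \<xi> i))"

definition sbf_p1 :: "(nat \<Rightarrow> nat) \<Rightarrow> (nat \<Rightarrow> (nat \<Rightarrow> real) set) \<Rightarrow> (nat \<Rightarrow> real) \<Rightarrow> (nat \<Rightarrow> real \<Rightarrow> real)
    \<Rightarrow> nat \<Rightarrow> nat \<Rightarrow> (nat \<Rightarrow> nat \<Rightarrow> nat \<Rightarrow> real) \<Rightarrow> nat \<Rightarrow> (nat \<Rightarrow> real) \<Rightarrow> real" where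
  "sbf_p1 L D h K d n \<xi> j xj = inverse (sbf_p0 d n D \<xi> * real n) *
      (\<Sum>i<n. sbf_Kh L D h K j xj (\<xi> i j) * of_bool (sbf_inD d D \<xi> i))"

definition sbf_p2 :: "(nat \<Rightarrow> nat) \<Rightarrow> (nat \<Rightarrow> (nat \<Rightarrow> real) set) \<Rightarrow> (nat \<Rightarrow> real) \<Rightarrow> (nat \<Rightarrow> real \<Rightarrow> real)
    \<Rightarrow> nat \<Rightarrow> nat \<Rightarrow> (nat \<Rightarrow> nat \<Rightarrow> nat \<Rightarrow> real) \<Rightarrow> nat \<Rightarrow> nat \<Rightarrow> (nat \<Rightarrow> real) \<Rightarrow> (nat \<Rightarrow> real) \<Rightarrow> real" where
  "sbf_p2 L D h K d n \<xi> j k xj xk = inverse (sbf_p0 d n D \<xi> * real n) *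
      (\<Sum>i<n. sbf_Kh L D h K j xj (\<xi> i j) * sbf_Kh L D h K k xk (\<xi> i k) * of_bool (sbf_inD d D \<xi> i))"

definition sbf_m :: "(nat \<Rightarrow> nat) \<Rightarrow> (nat \<Rightarrow> (nat \<Rightarrow> real) set) \<Rightarrow> (nat \<Rightarrow> real) \<Rightarrow> (nat \<Rightarrow> real \<Rightarrow> real)
    \<Rightarrow> nat \<Rightarrow> nat \<Rightarrow> (nat \<Rightarrow> nat \<Rightarrow> nat \<Rightarrow> real) \<Rightarrow> (nat \<Rightarrow> 'h::real_vector) \<Rightarrow> nat \<Rightarrow> (nat \<Rightarrow> real) \<Rightarrow> 'h" where
  "sbf_m L D h K d n \<xi> Y j xj = inverse (sbf_p1 L D h K d n \<xi> j xj * sbf_p0 d n D \<xi> * real n) *\<^sub>R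
      (\<Sum>i<n. (sbf_Kh L D h K j xj (\<xi> i j) * of_bool (sbf_inD d D \<xi> i)) *\<^sub>R Y i)"

definition sbf_proj :: "(nat \<Rightarrow> nat) \<Rightarrow> (nat \<Rightarrow> (nat \<Rightarrow> real) set) \<Rightarrow> (nat \<Rightarrow> real) \<Rightarrow> (nat \<Rightarrow> real \<Rightarrow> real)
    \<Rightarrow> nat \<Rightarrow> nat \<Rightarrow> (nat \<Rightarrow> nat \<Rightarrow> nat \<Rightarrow> real) \<Rightarrow> nat \<Rightarrow> nat
    \<Rightarrow> ((nat \<Rightarrow> real) \<Rightarrow> 'h::{banach,second_countable_topology}) \<Rightarrow> (nat \<Rightarrow> real) \<Rightarrow> 'h" where
  "sbf_proj L D h K d n \<xi> j k g xj =
     (LINT t : D k | lebL L k. (sbf_p2 L D h K d n \<xi> j k xj t / sbf_p1 L D h K d n \<xi> j xj) *\<^sub>R g t)"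

definition sbf_constraint :: "(nat \<Rightarrow> nat) \<Rightarrow> (nat \<Rightarrow> (nat \<Rightarrow> real) set) \<Rightarrow> (nat \<Rightarrow> real) \<Rightarrow> (nat \<Rightarrow> real \<Rightarrow> real)
    \<Rightarrow> nat \<Rightarrow> nat \<Rightarrow> (nat \<Rightarrow> nat \<Rightarrow> nat \<Rightarrow> real) \<Rightarrow> nat
    \<Rightarrow> ((nat \<Rightarrow> real) \<Rightarrow> 'h::{banach,second_countable_topology}) \<Rightarrow> bool" where
  "sbf_constraint L D h K d n \<xi> j g \<longleftrightarrow>
     g \<in> borel_measurable (lebL L j) \<and>
     (LINT t : D j | lebL L j. sbf_p1 L D h K d n \<xi> j t *\<^sub>R g t) = 0 \<and>
     (\<integral>\<^sup>+ t \<in> D j. ennreal ((norm (g t))\<^sup>2 * sbf_p1 L D h K d n \<xi> j t) \<partial>lebL L j) < \<infinity>"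

end

theory Submission
  imports Defs
begin

text \<open>The SBF equations are the normal equations for the best additive approximation in
  \<open>L\<^sup>2(p\<^sup>D)\<close>, and one cycle of the SBF algorithm applies, component after component, the
  orthogonal projections onto the spaces of functions of a single coordinate. For the errors
  \<open>G\<^sub>j = F\<^sub>j - f\<^sub>j\<close> the energy \<open>\<integral> \<parallel>\<Sum>\<^sub>j G\<^sub>j(x\<^sub>j)\<parallel>\<^sup>2 p\<^sup>D(x) dx\<close> therefore drops in each cycle
  by the sum of the squared step lengths. Because all estimators are finite kernel sums,
  every error component after a step is the combination \<open>\<Sum>\<^sub>i \<psi>\<^sub>j\<^sup>i(x\<^sub>j) v\<^sub>i\<close> of finitely many
  kernel-weighted local means \<open>v\<^sub>i\<close>, with weights \<open>\<psi>\<^sub>j\<^sup>i\<close> in \<open>[0,1]\<close>. The lower bound on \<open>p\<^sup>D\<close>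
  forces the kernels of the observations to overlap enough to bound every local mean of a
  centred error by a constant times the square root of its energy. Combined with the energy
  identity this gives a contraction of the energy by a fixed factor \<open>q < 1\<close> per cycle, hence
  geometric decay of the \<open>L\<^sup>2\<close> errors and, through the local means, even a uniform geometric
  bound on each \<open>D\<^sub>j\<close>, so that (ii) and (iii) hold with \<open>S\<^sub>j(\<epsilon>) = D\<^sub>j\<close>.\<close>

lemma power2_sum_le: "((x::real) + y)\<^sup>2 \<le> 2 * x\<^sup>2 + 2 * y\<^sup>2"
  using sum_squares_bound[of x y] by (simp add: power2_sum)

lemma exists_ge_average:
  fixes f :: "'a \<Rightarrow> real"
  assumes "finite A" "A \<noteq> {}" "c \<le> sum f A"
  shows "\<exists>i\<in>A. c / real (card A) \<le> f i"
proof (rule ccontr)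
  assume "\<not> ?thesis"
  then have "sum f A < (\<Sum>i\<in>A. c / real (card A))"
    using assms(1,2) by (intro sum_strict_mono) auto
  with assms show False by simp
qed

lemma sum_atLeastAtMost_split_at:
  fixes f :: "nat \<Rightarrow> 'a::comm_monoid_add"
  assumes "j \<in> {1..d}"
  shows "(\<Sum>k\<in>{1..d}. f k) = (\<Sum>k\<in>{1..<j}. f k) + f j + (\<Sum>k\<in>{j<..d}. f k)"
proof -
  have e: "{1..d} = {1..<j} \<union> insert j {j<..d}" using assms by auto
  have "(\<Sum>k\<in>{1..d}. f k) = (\<Sum>k\<in>{1..<j}. f k) + (\<Sum>k\<in>insert j {j<..d}. f k)"
    unfolding e by (rule sum.union_disjoint) auto
  then show ?thesis by (simp add: add.assoc)
qed

lemma sum_atLeastAtMost_remove_split: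
  fixes f :: "nat \<Rightarrow> 'a::comm_monoid_add"
  assumes "j \<in> {1..d}"
  shows "(\<Sum>k\<in>{1..d}-{j}. f k) = (\<Sum>k\<in>{1..<j}. f k) + (\<Sum>k\<in>{j<..d}. f k)"
proof -
  have e: "{1..d}-{j} = {1..<j} \<union> {j<..d}" using assms by auto
  show ?thesis unfolding e by (rule sum.union_disjoint) auto
qed

lemma power2_norm_sum_eq:
  fixes x :: "nat \<Rightarrow> 'a::real_inner"
  shows "(norm (\<Sum>k\<in>{1..d}. x k))\<^sup>2
           = (\<Sum>j\<in>{1..d}. (norm (x j))\<^sup>2 + inner (x j) ((\<Sum>k\<in>{1..<j}. x k) + (\<Sum>k\<in>{j<..d}. x k)))"
proof -
  have "(norm (\<Sum>k\<in>{1..d}. x k))\<^sup>2 = (\<Sum>j\<in>{1..d}. inner (x j) (\<Sum>k\<in>{1..d}. x k))"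
    unfolding power2_norm_eq_inner by (rule inner_sum_left)
  also have "\<dots> = (\<Sum>j\<in>{1..d}. (norm (x j))\<^sup>2 + inner (x j) ((\<Sum>k\<in>{1..<j}. x k) + (\<Sum>k\<in>{j<..d}. x k)))"
  proof (rule sum.cong[OF refl])
    fix j assume j: "j \<in> {1..d}"
    show "inner (x j) (\<Sum>k\<in>{1..d}. x k)
        = (norm (x j))\<^sup>2 + inner (x j) ((\<Sum>k\<in>{1..<j}. x k) + (\<Sum>k\<in>{j<..d}. x k))"
      unfolding sum_atLeastAtMost_split_at[OF j] power2_norm_eq_inner by (simp add: inner_add_right)
  qed
  finally show ?thesis .
qed

lemma uniform_limit_geometric:
  fixes g :: "nat \<Rightarrow> 'a \<Rightarrow> 'b::metric_space"
  assumes \<rho>: "0 < \<rho>" "\<rho> < 1" and bound: "\<And>r x. x \<in> S \<Longrightarrow> dist (g (Suc r) x) (f x) \<le> C * \<rho> ^ r"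
  shows "uniform_limit S g f sequentially"
proof (rule uniform_limitI)
  fix e :: real assume e: "0 < e"
  have "(\<lambda>r. C * \<rho> ^ r) \<longlonglongrightarrow> 0" using \<rho> by (intro tendsto_mult_right_zero LIMSEQ_power_zero) auto
  then have "eventually (\<lambda>r. C * \<rho> ^ r < e) sequentially" using e by (rule order_tendstoD)
  then have "eventually (\<lambda>r. \<forall>x\<in>S. dist (g (Suc r) x) (f x) < e) sequentially"
    by eventually_elim (use bound in \<open>auto intro: le_less_trans\<close>)
  then show "eventually (\<lambda>r. \<forall>x\<in>S. dist (g r x) (f x) < e) sequentially"
    using eventually_sequentially_Suc[of "\<lambda>r. \<forall>x\<in>S. dist (g r x) (f x) < e"] by simp
qed

section \<open>Systems of kernels and the energy of additive functions\<close>

text \<open>The abstract setting: \<open>M k\<close> is Lebesgue measure on \<open>D\<^sub>k\<close>, \<open>\<kappa> k i\<close> is the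
  boundary-corrected kernel \<open>K\<^sub>h\<^sub>k(\<cdot>, \<xi>\<^sup>i\<^sub>k)\<close>, \<open>I\<close> is the set of observations in \<open>D\<close>
  and \<open>a = 1/|I|\<close>, so that \<open>a \<Sum>\<^sub>i \<Prod>\<^sub>k \<kappa> k i (x\<^sub>k)\<close> is the density estimate \<open>p\<^sup>D(x)\<close>.\<close>

locale backfitting_kernels =
  fixes d :: nat and I :: "nat set" and M :: "nat \<Rightarrow> 'x measure"
    and \<kappa> :: "nat \<Rightarrow> nat \<Rightarrow> 'x \<Rightarrow> real" and a :: real
  assumes finite_I: "finite I" and I_nonempty: "I \<noteq> {}" and a_pos: "0 < a"
    and finite_M: "\<And>k. k \<in> {1..d} \<Longrightarrow> finite_measure (M k)"
    and kernel_measurable: "\<And>k i. k \<in> {1..d} \<Longrightarrow> i \<in> I \<Longrightarrow> \<kappa> k i \<in> borel_measurable (M k)"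
    and kernel_nonneg: "\<And>k i t. k \<in> {1..d} \<Longrightarrow> i \<in> I \<Longrightarrow> t \<in> space (M k) \<Longrightarrow> 0 \<le> \<kappa> k i t"
    and kernel_bounded: "\<exists>B. \<forall>k\<in>{1..d}. \<forall>i\<in>I. \<forall>t\<in>space (M k). \<kappa> k i t \<le> B"
    and kernel_integral: "\<And>k i. k \<in> {1..d} \<Longrightarrow> i \<in> I \<Longrightarrow> integral\<^sup>L (M k) (\<kappa> k i) = 1"
    and density_lower_bound: "\<exists>c>0. \<forall>x. (\<forall>k\<in>{1..d}. x k \<in> space (M k)) \<longrightarrow>
                                  c \<le> a * (\<Sum>i\<in>I. \<Prod>k\<in>{1..d}. \<kappa> k i (x k))"
begin

definition marginal :: "nat \<Rightarrow> 'x \<Rightarrow> real" where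
  "marginal k t = a * (\<Sum>i\<in>I. \<kappa> k i t)"

definition weight :: "nat \<Rightarrow> nat \<Rightarrow> 'x \<Rightarrow> real" where
  "weight k i t = a * \<kappa> k i t / marginal k t"

definition local_mean :: "nat \<Rightarrow> nat \<Rightarrow> ('x \<Rightarrow> 'h::{banach,second_countable_topology}) \<Rightarrow> 'h" where
  "local_mean k i g = (\<integral>t. \<kappa> k i t *\<^sub>R g t \<partial>M k)"

definition blend :: "nat \<Rightarrow> (nat \<Rightarrow> 'h::real_vector) \<Rightarrow> 'x \<Rightarrow> 'h" where
  "blend k v t = (\<Sum>i\<in>I. weight k i t *\<^sub>R v i)"

definition local_inner :: "nat \<Rightarrow> nat \<Rightarrow> ('x \<Rightarrow> 'h::real_inner) \<Rightarrow> ('x \<Rightarrow> 'h) \<Rightarrow> real" where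
  "local_inner k i g g' = (\<integral>t. \<kappa> k i t * inner (g t) (g' t) \<partial>M k)"

definition marginal_norm2 :: "nat \<Rightarrow> ('x \<Rightarrow> 'h::real_inner) \<Rightarrow> real" where
  "marginal_norm2 k g = (\<Sum>i\<in>I. a * local_inner k i g g)"

definition square_integrable :: "nat \<Rightarrow> ('x \<Rightarrow> 'h::real_normed_vector) \<Rightarrow> bool" where
  "square_integrable k g \<longleftrightarrow> g \<in> borel_measurable (M k) \<and> integrable (M k) (\<lambda>t. (norm (g t))\<^sup>2)"

definition centered :: "nat \<Rightarrow> ('x \<Rightarrow> 'h::{banach,second_countable_topology}) \<Rightarrow> bool" where
  "centered k g \<longleftrightarrow> (\<Sum>i\<in>I. local_mean k i g) = 0"

text \<open>\<open>energy G\<close> is \<open>\<integral> \<parallel>\<Sum>\<^sub>k G k (x\<^sub>k)\<parallel>\<^sup>2 p\<^sup>D(x) dx\<close>: under the product of the kernels of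
  observation \<open>i\<close> the components are independent, so that integral is the sum of their
  variances plus the squared norm of the sum of their means.\<close>

definition energy :: "(nat \<Rightarrow> 'x \<Rightarrow> 'h::{real_inner,banach,second_countable_topology}) \<Rightarrow> real" where
  "energy G = (\<Sum>i\<in>I. a * ((\<Sum>k\<in>{1..d}. local_inner k i (G k) (G k) - (norm (local_mean k i (G k)))\<^sup>2)
                            + (norm (\<Sum>k\<in>{1..d}. local_mean k i (G k)))\<^sup>2))"

lemma card_I_pos: "0 < real (card I)"
  using finite_I I_nonempty by (simp add: card_gt_0_iff)

lemma integrable_kernel: "k \<in> {1..d} \<Longrightarrow> i \<in> I \<Longrightarrow> integrable (M k) (\<kappa> k i)"
  using kernel_integral not_integrable_integral_eq by fastforce

lemma space_nonempty:
  assumes "k \<in> {1..d}" shows "space (M k) \<noteq> {}"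
proof
  assume "space (M k) = {}"
  then have "integral\<^sup>L (M k) (\<kappa> k i) = 0" for i
    by (intro integral_eq_zero_AE AE_I2) simp
  then show False using kernel_integral[OF assms] I_nonempty by fastforce
qed

text \<open>Some summand of \<open>p\<^sup>D(x)\<close> is at least its average, and all but one of its factors are
  bounded by the kernel bound.\<close>

lemma joint_cover:
  obtains \<eta> where "0 < \<eta>"
    and "\<And>x. (\<And>k. k \<in> {1..d} \<Longrightarrow> x k \<in> space (M k)) \<Longrightarrow> \<exists>i\<in>I. \<forall>k\<in>{1..d}. \<eta> \<le> \<kappa> k i (x k)"
proof -
  obtain c where c: "0 < c" and lower: "\<And>x. (\<forall>k\<in>{1..d}. x k \<in> space (M k)) \<Longrightarrow>
      c \<le> a * (\<Sum>i\<in>I. \<Prod>k\<in>{1..d}. \<kappa> k i (x k))"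
    using density_lower_bound by blast
  obtain B0 where B0: "\<forall>k\<in>{1..d}. \<forall>i\<in>I. \<forall>t\<in>space (M k). \<kappa> k i t \<le> B0"
    using kernel_bounded by blast
  define B where "B = max B0 1"
  define \<eta> where "\<eta> = c / (a * real (card I) * B ^ d)"
  have B1: "1 \<le> B" unfolding B_def by simp
  have "\<exists>i\<in>I. \<forall>k\<in>{1..d}. \<eta> \<le> \<kappa> k i (x k)" if x: "\<And>k. k \<in> {1..d} \<Longrightarrow> x k \<in> space (M k)" for x
  proof -
    have "c / a \<le> (\<Sum>i\<in>I. \<Prod>k\<in>{1..d}. \<kappa> k i (x k))"
      using lower x a_pos by (simp add: field_simps mult.commute)
    then obtain i where i: "i \<in> I"
      and ci: "c / a / real (card I) \<le> (\<Prod>k\<in>{1..d}. \<kappa> k i (x k))"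
      using exists_ge_average[OF finite_I I_nonempty] by blast
    have "\<eta> \<le> \<kappa> k i (x k)" if k: "k \<in> {1..d}" for k
    proof -
      have nonneg: "\<And>m. m \<in> {1..d} \<Longrightarrow> 0 \<le> \<kappa> m i (x m)" using kernel_nonneg i x by blast
      have "(\<Prod>m\<in>{1..d}-{k}. \<kappa> m i (x m)) \<le> (\<Prod>m\<in>{1..d}-{k}. B)"
        using nonneg B0 i x unfolding B_def by (intro prod_mono) (auto intro: le_max_iff_disj[THEN iffD2])
      also have "\<dots> \<le> B ^ d"
        using B1 card_Diff1_le[of "{1..d}" k] by (simp add: power_increasing)
      finally have rest: "(\<Prod>m\<in>{1..d}-{k}. \<kappa> m i (x m)) \<le> B ^ d" .
      have "(\<Prod>m\<in>{1..d}. \<kappa> m i (x m)) = \<kappa> k i (x k) * (\<Prod>m\<in>{1..d}-{k}. \<kappa> m i (x m))"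
        using k by (simp add: prod.remove)
      also have "\<dots> \<le> \<kappa> k i (x k) * B ^ d" using rest nonneg[OF k] by (rule mult_left_mono)
      finally have "c / a / real (card I) \<le> \<kappa> k i (x k) * B ^ d" using ci by linarith
      then show ?thesis unfolding \<eta>_def using a_pos card_I_pos B1 by (simp add: field_simps)
    qed
    then show ?thesis using i by blast
  qed
  moreover have "0 < \<eta>" unfolding \<eta>_def using c a_pos card_I_pos B1 by simp
  ultimately show thesis using that by blast
qed

lemma marginal_lower_bound:
  obtains c where "0 < c" and "\<And>k t. k \<in> {1..d} \<Longrightarrow> t \<in> space (M k) \<Longrightarrow> c \<le> marginal k t"
proof -
  obtain \<eta> where \<eta>: "0 < \<eta>"
    and cover: "\<And>x. (\<And>k. k \<in> {1..d} \<Longrightarrow> x k \<in> space (M k)) \<Longrightarrow> \<exists>i\<in>I. \<forall>k\<in>{1..d}. \<eta> \<le> \<kappa> k i (x k)"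
    using joint_cover by blast
  have "a * \<eta> \<le> marginal k t" if k: "k \<in> {1..d}" and t: "t \<in> space (M k)" for k t
  proof -
    have "\<forall>m\<in>{1..d}. \<exists>s. s \<in> space (M m)" using space_nonempty by blast
    then obtain y where y: "\<And>m. m \<in> {1..d} \<Longrightarrow> y m \<in> space (M m)" by metis
    obtain i where i: "i \<in> I" "\<forall>m\<in>{1..d}. \<eta> \<le> \<kappa> m i ((y(k := t)) m)"
      using cover[of "y(k := t)"] y t by fastforce
    then have "\<eta> \<le> \<kappa> k i t" using k by fastforce
    also have "\<kappa> k i t \<le> (\<Sum>i\<in>I. \<kappa> k i t)"
      using i kernel_nonneg k t finite_I by (intro member_le_sum) auto
    finally show ?thesis unfolding marginal_def using a_pos by simp
  qed
  then show thesis by (intro that[of "a * \<eta>"]) (use a_pos \<eta> in auto)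
qed

lemma marginal_pos: "k \<in> {1..d} \<Longrightarrow> t \<in> space (M k) \<Longrightarrow> 0 < marginal k t"
  by (metis marginal_lower_bound order_less_le_trans)

lemma weight_nonneg: "k \<in> {1..d} \<Longrightarrow> i \<in> I \<Longrightarrow> t \<in> space (M k) \<Longrightarrow> 0 \<le> weight k i t"
  unfolding weight_def using marginal_pos[of k t] kernel_nonneg[of k i t] a_pos by simp

lemma kernel_times_weight_sum:
  assumes "k \<in> {1..d}" "t \<in> space (M k)"
  shows "(\<Sum>i\<in>I. \<kappa> k i t * weight k l t) = \<kappa> k l t"
proof -
  have S: "(\<Sum>i\<in>I. \<kappa> k i t) \<noteq> 0" using marginal_pos[OF assms] unfolding marginal_def by (metis less_irrefl mult_zero_right)
  have "(\<Sum>i\<in>I. \<kappa> k i t * weight k l t) = (\<Sum>i\<in>I. \<kappa> k i t) * (a * \<kappa> k l t) / marginal k t"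
    by (simp add: weight_def sum_distrib_right sum_divide_distrib)
  also have "\<dots> = \<kappa> k l t" using S a_pos by (simp add: marginal_def)
  finally show ?thesis .
qed

lemma sum_weight: "k \<in> {1..d} \<Longrightarrow> t \<in> space (M k) \<Longrightarrow> (\<Sum>i\<in>I. weight k i t) = 1"
  using marginal_pos[of k t] by (simp add: weight_def marginal_def sum_divide_distrib[symmetric] sum_distrib_left)

lemma weight_le_one: "k \<in> {1..d} \<Longrightarrow> i \<in> I \<Longrightarrow> t \<in> space (M k) \<Longrightarrow> weight k i t \<le> 1"
  using member_le_sum[of i I "\<lambda>i. weight k i t"] weight_nonneg sum_weight finite_I by fastforce

lemma marginal_measurable: "k \<in> {1..d} \<Longrightarrow> marginal k \<in> borel_measurable (M k)"
  unfolding marginal_def[abs_def] using kernel_measurable by measurable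

lemma weight_measurable: "k \<in> {1..d} \<Longrightarrow> i \<in> I \<Longrightarrow> weight k i \<in> borel_measurable (M k)"
  unfolding weight_def[abs_def] using kernel_measurable marginal_measurable by measurable

lemma integrable_kernel_scaleR_dominated:
  fixes g :: "'x \<Rightarrow> 'h::{banach,second_countable_topology}"
  assumes k: "k \<in> {1..d}" and i: "i \<in> I" and u: "integrable (M k) u"
    and g: "g \<in> borel_measurable (M k)" and dom: "\<And>t. t \<in> space (M k) \<Longrightarrow> norm (g t) \<le> u t"
  shows "integrable (M k) (\<lambda>t. \<kappa> k i t *\<^sub>R g t)"
proof -
  obtain B where B: "\<And>t. t \<in> space (M k) \<Longrightarrow> \<kappa> k i t \<le> B" using kernel_bounded k i by blast
  have bound: "norm (\<kappa> k i t *\<^sub>R g t) \<le> norm (B * u t)" if t: "t \<in> space (M k)" for t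
  proof -
    have "norm (\<kappa> k i t *\<^sub>R g t) = \<kappa> k i t * norm (g t)" using kernel_nonneg[OF k i t] by simp
    also have "\<dots> \<le> B * u t"
      using kernel_nonneg[OF k i t] B[OF t] dom[OF t] by (intro mult_mono) auto
    finally show ?thesis by simp
  qed
  have meas: "(\<lambda>t. \<kappa> k i t *\<^sub>R g t) \<in> borel_measurable (M k)"
    using g kernel_measurable[OF k i] by measurable
  have int: "integrable (M k) (\<lambda>t. B * u t)" using u by simp
  show ?thesis by (rule Bochner_Integration.integrable_bound[OF int meas AE_I2[OF bound]])
qed

lemma integrable_kernel_mult_dominated:
  assumes "k \<in> {1..d}" "i \<in> I" "integrable (M k) u"
    and "g \<in> borel_measurable (M k)" "\<And>t. t \<in> space (M k) \<Longrightarrow> \<bar>g t\<bar> \<le> u t"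
  shows "integrable (M k) (\<lambda>t. \<kappa> k i t * g t)"
  using integrable_kernel_scaleR_dominated[OF assms(1-4)] assms(5) by simp

lemma square_integrable_measurable: "square_integrable k g \<Longrightarrow> g \<in> borel_measurable (M k)"
  by (simp add: square_integrable_def)

lemma integrable_norm:
  fixes g :: "'x \<Rightarrow> 'h::real_normed_vector"
  assumes k: "k \<in> {1..d}" and g: "square_integrable k g"
  shows "integrable (M k) (\<lambda>t. norm (g t))"
proof (rule finite_measure.square_integrable_imp_integrable[OF finite_M[OF k]])
  have [measurable]: "g \<in> borel_measurable (M k)" using g unfolding square_integrable_def by blast
  show "(\<lambda>t. norm (g t)) \<in> borel_measurable (M k)" by measurable
  show "integrable (M k) (\<lambda>t. (norm (g t))\<^sup>2)" using g unfolding square_integrable_def by blast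
qed

lemma integrable_kernel_scaleR:
  fixes g :: "'x \<Rightarrow> 'h::{banach,second_countable_topology}"
  assumes "k \<in> {1..d}" "i \<in> I" "square_integrable k g"
  shows "integrable (M k) (\<lambda>t. \<kappa> k i t *\<^sub>R g t)"
  by (rule integrable_kernel_scaleR_dominated[OF assms(1,2) integrable_norm[OF assms(1,3)]
        square_integrable_measurable[OF assms(3)]]) simp

lemma integrable_kernel_inner:
  fixes g g' :: "'x \<Rightarrow> 'h::{real_inner,banach,second_countable_topology}"
  assumes k: "k \<in> {1..d}" and i: "i \<in> I" and g: "square_integrable k g" and g': "square_integrable k g'"
  shows "integrable (M k) (\<lambda>t. \<kappa> k i t * inner (g t) (g' t))"
proof (rule integrable_kernel_mult_dominated[OF k i])
  show "integrable (M k) (\<lambda>t. (norm (g t))\<^sup>2 + (norm (g' t))\<^sup>2)"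
    using g g' unfolding square_integrable_def by (intro Bochner_Integration.integrable_add) auto
  have [measurable]: "g \<in> borel_measurable (M k)" "g' \<in> borel_measurable (M k)"
    using g g' by (auto simp: square_integrable_def)
  show "(\<lambda>t. inner (g t) (g' t)) \<in> borel_measurable (M k)" by measurable
  fix t
  have "2 * (norm (g t) * norm (g' t)) \<le> (norm (g t))\<^sup>2 + (norm (g' t))\<^sup>2"
    using sum_squares_bound[of "norm (g t)" "norm (g' t)"] by (simp add: mult.assoc)
  moreover have "0 \<le> norm (g t) * norm (g' t)" by simp
  ultimately have "norm (g t) * norm (g' t) \<le> (norm (g t))\<^sup>2 + (norm (g' t))\<^sup>2" by linarith
  then show "\<bar>inner (g t) (g' t)\<bar> \<le> (norm (g t))\<^sup>2 + (norm (g' t))\<^sup>2"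
    using Cauchy_Schwarz_ineq2[of "g t" "g' t"] by linarith
qed

lemma square_integrable_cong:
  "square_integrable k g \<Longrightarrow> (\<And>t. t \<in> space (M k) \<Longrightarrow> g' t = g t) \<Longrightarrow> square_integrable k g'"
  unfolding square_integrable_def
  by (metis (no_types, lifting) measurable_cong Bochner_Integration.integrable_cong)

lemma square_integrable_const: "k \<in> {1..d} \<Longrightarrow> square_integrable k (\<lambda>t. c)"
  unfolding square_integrable_def using finite_measure.integrable_const[OF finite_M] by auto

lemma square_integrable_add:
  fixes g g' :: "'x \<Rightarrow> 'h::{banach,second_countable_topology}"
  assumes g: "square_integrable k g" and g': "square_integrable k g'"
  shows "square_integrable k (\<lambda>t. g t + g' t)"
proof -
  have [measurable]: "g \<in> borel_measurable (M k)" "g' \<in> borel_measurable (M k)"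
    using g g' by (auto simp: square_integrable_def)
  have int: "integrable (M k) (\<lambda>t. 2 * (norm (g t))\<^sup>2 + 2 * (norm (g' t))\<^sup>2)"
    using g g' unfolding square_integrable_def by (intro Bochner_Integration.integrable_add) auto
  have "(norm (g t + g' t))\<^sup>2 \<le> 2 * (norm (g t))\<^sup>2 + 2 * (norm (g' t))\<^sup>2" for t
    using power_mono[OF norm_triangle_ineq norm_ge_zero, of "g t" "g' t" 2]
      power2_sum_le[of "norm (g t)" "norm (g' t)"] by linarith
  moreover have "(\<lambda>t. (norm (g t + g' t))\<^sup>2) \<in> borel_measurable (M k)" by measurable
  ultimately have "integrable (M k) (\<lambda>t. (norm (g t + g' t))\<^sup>2)"
    by (intro Bochner_Integration.integrable_bound[OF int]) (simp_all add: AE_I2)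
  then show ?thesis unfolding square_integrable_def by simp
qed

lemma square_integrable_uminus:
  fixes g :: "'x \<Rightarrow> 'h::{real_normed_vector,second_countable_topology}"
  shows "square_integrable k g \<Longrightarrow> square_integrable k (\<lambda>t. - g t)"
  unfolding square_integrable_def by (simp add: borel_measurable_uminus)

lemma square_integrable_diff:
  fixes g g' :: "'x \<Rightarrow> 'h::{banach,second_countable_topology}"
  shows "square_integrable k g \<Longrightarrow> square_integrable k g' \<Longrightarrow> square_integrable k (\<lambda>t. g t - g' t)"
  using square_integrable_add[of k g "\<lambda>t. - g' t"] square_integrable_uminus[of k g'] by simp

lemma local_mean_cong: "(\<And>t. t \<in> space (M k) \<Longrightarrow> g' t = g t) \<Longrightarrow> local_mean k i g' = local_mean k i g"
  unfolding local_mean_def by (rule Bochner_Integration.integral_cong) auto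

lemma local_inner_cong:
  "(\<And>t. t \<in> space (M k) \<Longrightarrow> g' t = g t) \<Longrightarrow> (\<And>t. t \<in> space (M k) \<Longrightarrow> h' t = h t) \<Longrightarrow>
    local_inner k i g' h' = local_inner k i g h"
  unfolding local_inner_def by (rule Bochner_Integration.integral_cong) auto

lemma local_mean_diff:
  fixes g g' :: "'x \<Rightarrow> 'h::{banach,second_countable_topology}"
  assumes "k \<in> {1..d}" "i \<in> I" "square_integrable k g" "square_integrable k g'"
  shows "local_mean k i (\<lambda>t. g t - g' t) = local_mean k i g - local_mean k i g'"
  unfolding local_mean_def
  using integrable_kernel_scaleR[OF assms(1-3)] integrable_kernel_scaleR[OF assms(1,2,4)]
  by (simp add: scaleR_diff_right)

lemma local_inner_self: "local_inner k i g g = (\<integral>t. \<kappa> k i t * (norm (g t))\<^sup>2 \<partial>M k)"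
  unfolding local_inner_def by (simp add: power2_norm_eq_inner)

lemma local_inner_commute: "local_inner k i g h = local_inner k i h g"
  unfolding local_inner_def by (simp add: inner_commute)

lemma local_inner_self_nonneg: "k \<in> {1..d} \<Longrightarrow> i \<in> I \<Longrightarrow> 0 \<le> local_inner k i g g"
  unfolding local_inner_self by (rule integral_nonneg_AE, rule AE_I2) (simp add: kernel_nonneg)

lemma local_inner_diff_left:
  fixes g g' h :: "'x \<Rightarrow> 'h::{real_inner,banach,second_countable_topology}"
  assumes "k \<in> {1..d}" "i \<in> I" "square_integrable k g" "square_integrable k g'" "square_integrable k h"
  shows "local_inner k i (\<lambda>t. g t - g' t) h = local_inner k i g h - local_inner k i g' h"
  unfolding local_inner_def
  using integrable_kernel_inner[OF assms(1-3,5)] integrable_kernel_inner[OF assms(1,2,4,5)]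
  by (simp add: inner_diff_left right_diff_distrib)

lemma local_inner_diff_diff:
  fixes g g' :: "'x \<Rightarrow> 'h::{real_inner,banach,second_countable_topology}"
  assumes k: "k \<in> {1..d}" and i: "i \<in> I" and g: "square_integrable k g" and g': "square_integrable k g'"
  shows "local_inner k i (\<lambda>t. g t - g' t) (\<lambda>t. g t - g' t)
           = local_inner k i g g - 2 * local_inner k i g g' + local_inner k i g' g'"
proof -
  have gd: "square_integrable k (\<lambda>t. g t - g' t)" by (rule square_integrable_diff[OF g g'])
  have "local_inner k i (\<lambda>t. g t - g' t) (\<lambda>t. g t - g' t)
      = local_inner k i g (\<lambda>t. g t - g' t) - local_inner k i g' (\<lambda>t. g t - g' t)"
    by (rule local_inner_diff_left[OF k i g g' gd])
  also have "local_inner k i g (\<lambda>t. g t - g' t) = local_inner k i g g - local_inner k i g' g"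
    by (subst local_inner_commute, subst local_inner_diff_left[OF k i g g' g]) (simp add: local_inner_commute)
  also have "local_inner k i g' (\<lambda>t. g t - g' t) = local_inner k i g g' - local_inner k i g' g'"
    by (subst local_inner_commute, subst local_inner_diff_left[OF k i g g' g']) simp
  finally show ?thesis by (simp add: local_inner_commute[of k i g' g])
qed

lemma local_variance_eq:
  fixes g :: "'x \<Rightarrow> 'h::{real_inner,banach,second_countable_topology}"
  assumes k: "k \<in> {1..d}" and i: "i \<in> I" and g: "square_integrable k g"
  shows "local_inner k i g g - (norm (local_mean k i g))\<^sup>2
           = (\<integral>t. \<kappa> k i t * (norm (g t - local_mean k i g))\<^sup>2 \<partial>M k)"
proof -
  let ?m = "local_mean k i g"
  have "(\<integral>t. \<kappa> k i t * (norm (g t - ?m))\<^sup>2 \<partial>M k) = local_inner k i (\<lambda>t. g t - ?m) (\<lambda>t. g t - ?m)"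
    by (simp add: local_inner_self)
  also have "\<dots> = local_inner k i g g - 2 * local_inner k i g (\<lambda>t. ?m) + local_inner k i (\<lambda>t. ?m) (\<lambda>t. ?m)"
    by (rule local_inner_diff_diff[OF k i g square_integrable_const[OF k]])
  also have "local_inner k i g (\<lambda>t. ?m) = inner ?m ?m"
    unfolding local_inner_def local_mean_def using integrable_kernel_scaleR[OF k i g]
    by (subst integral_inner_left[symmetric]) auto
  also have "local_inner k i (\<lambda>t. ?m) (\<lambda>t. ?m) = inner ?m ?m"
    unfolding local_inner_def using kernel_integral[OF k i] by simp
  finally show ?thesis by (simp add: power2_norm_eq_inner)
qed

lemma local_variance_nonneg:
  fixes g :: "'x \<Rightarrow> 'h::{real_inner,banach,second_countable_topology}"
  assumes "k \<in> {1..d}" "i \<in> I" "square_integrable k g"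
  shows "(norm (local_mean k i g))\<^sup>2 \<le> local_inner k i g g"
proof -
  have "0 \<le> (\<integral>t. \<kappa> k i t * (norm (g t - local_mean k i g))\<^sup>2 \<partial>M k)"
    by (rule integral_nonneg_AE, rule AE_I2) (use kernel_nonneg assms in simp)
  then show ?thesis using local_variance_eq[OF assms] by simp
qed

lemma marginal_norm2_nonneg: "k \<in> {1..d} \<Longrightarrow> 0 \<le> marginal_norm2 k g"
  unfolding marginal_norm2_def
  by (intro sum_nonneg) (auto intro!: mult_nonneg_nonneg local_inner_self_nonneg simp: less_imp_le[OF a_pos])

lemma local_inner_le_marginal_norm2:
  "k \<in> {1..d} \<Longrightarrow> i \<in> I \<Longrightarrow> a * local_inner k i g g \<le> marginal_norm2 k g"
  unfolding marginal_norm2_def using finite_I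
  by (intro member_le_sum[where f="\<lambda>i. a * local_inner k i g g"])
     (auto intro!: mult_nonneg_nonneg local_inner_self_nonneg simp: less_imp_le[OF a_pos])

lemma marginal_norm2_diff:
  fixes g g' :: "'x \<Rightarrow> 'h::{real_inner,banach,second_countable_topology}"
  assumes k: "k \<in> {1..d}" and g: "square_integrable k g" and g': "square_integrable k g'"
  shows "marginal_norm2 k (\<lambda>t. g t - g' t)
           = marginal_norm2 k g - 2 * (\<Sum>i\<in>I. a * local_inner k i g g') + marginal_norm2 k g'"
  unfolding marginal_norm2_def
  by (simp add: local_inner_diff_diff[OF k _ g g'] algebra_simps sum.distrib sum_subtractf sum_distrib_left)

lemma marginal_norm2_eq:
  fixes g :: "'x \<Rightarrow> 'h::{real_inner,banach,second_countable_topology}"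
  assumes j: "j \<in> {1..d}" and g: "square_integrable j g"
  shows "marginal_norm2 j g = (\<integral>t. marginal j t * (norm (g t))\<^sup>2 \<partial>M j)"
proof -
  have "\<And>i. i \<in> I \<Longrightarrow> integrable (M j) (\<lambda>t. a * (\<kappa> j i t * (norm (g t))\<^sup>2))"
    using integrable_kernel_inner[OF j _ g g] by (simp add: power2_norm_eq_inner)
  then have "marginal_norm2 j g = (\<integral>t. (\<Sum>i\<in>I. a * (\<kappa> j i t * (norm (g t))\<^sup>2)) \<partial>M j)"
    unfolding marginal_norm2_def local_inner_self by simp
  then show ?thesis
    unfolding marginal_def by (simp add: sum_distrib_left sum_distrib_right mult.assoc)
qed

lemma integral_norm2_le_marginal_norm2:
  fixes g :: "'x \<Rightarrow> 'h::{real_inner,banach,second_countable_topology}"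
  assumes j: "j \<in> {1..d}" and g: "square_integrable j g"
    and c: "\<And>t. t \<in> space (M j) \<Longrightarrow> c \<le> marginal j t"
  shows "c * (\<integral>t. (norm (g t))\<^sup>2 \<partial>M j) \<le> marginal_norm2 j g"
proof -
  have "integrable (M j) (\<lambda>t. \<Sum>i\<in>I. a * (\<kappa> j i t * (norm (g t))\<^sup>2))"
    using integrable_kernel_inner[OF j _ g g] by (simp add: power2_norm_eq_inner)
  then have "integrable (M j) (\<lambda>t. marginal j t * (norm (g t))\<^sup>2)"
    unfolding marginal_def by (simp add: sum_distrib_left sum_distrib_right mult.assoc)
  moreover have "integrable (M j) (\<lambda>t. c * (norm (g t))\<^sup>2)"
    using g by (simp add: square_integrable_def)
  ultimately have "(\<integral>t. c * (norm (g t))\<^sup>2 \<partial>M j) \<le> (\<integral>t. marginal j t * (norm (g t))\<^sup>2 \<partial>M j)"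
    using c by (intro integral_mono mult_right_mono) auto
  then show ?thesis using marginal_norm2_eq[OF j g] by simp
qed

lemma blend_measurable:
  fixes v :: "nat \<Rightarrow> 'h::{real_normed_vector,second_countable_topology}"
  shows "k \<in> {1..d} \<Longrightarrow> blend k v \<in> borel_measurable (M k)"
  unfolding blend_def[abs_def] by (rule borel_measurable_sum, rule borel_measurable_scaleR) (auto intro: weight_measurable)

lemma norm_blend_le:
  assumes k: "k \<in> {1..d}" and t: "t \<in> space (M k)"
  shows "norm (blend k v t) \<le> (\<Sum>i\<in>I. norm (v i))"
proof -
  have "norm (blend k v t) \<le> (\<Sum>i\<in>I. norm (weight k i t *\<^sub>R v i))" unfolding blend_def by (rule norm_sum)
  also have "\<dots> \<le> (\<Sum>i\<in>I. norm (v i))"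
    using weight_nonneg[OF k _ t] weight_le_one[OF k _ t]
    by (intro sum_mono) (simp add: mult_left_le_one_le)
  finally show ?thesis .
qed

lemma square_integrable_blend:
  fixes v :: "nat \<Rightarrow> 'h::{real_normed_vector,second_countable_topology}"
  assumes k: "k \<in> {1..d}" shows "square_integrable k (blend k v)"
proof -
  have "integrable (M k) (\<lambda>t. (norm (blend k v t))\<^sup>2)"
  proof (rule Bochner_Integration.integrable_bound)
    show "integrable (M k) (\<lambda>t. (\<Sum>i\<in>I. norm (v i))\<^sup>2)"
      using finite_measure.integrable_const[OF finite_M[OF k]] by blast
    show "(\<lambda>t. (norm (blend k v t))\<^sup>2) \<in> borel_measurable (M k)" using blend_measurable[OF k] by measurable
    show "AE t in M k. norm ((norm (blend k v t))\<^sup>2) \<le> norm ((\<Sum>i\<in>I. norm (v i))\<^sup>2)"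
      by (rule AE_I2) (use norm_blend_le[OF k] in \<open>auto intro!: power_mono\<close>)
  qed
  then show ?thesis using blend_measurable[OF k] unfolding square_integrable_def by auto
qed

lemma blend_diff: "blend j v t - blend j w t = blend j (\<lambda>i. v i - w i) t"
  unfolding blend_def by (simp add: sum_subtractf scaleR_diff_right)

lemma blend_add: "blend j v t + blend j w t = blend j (\<lambda>i. v i + w i) t"
  unfolding blend_def by (simp add: sum.distrib scaleR_add_right)

lemma blend_uminus: "- blend j v t = blend j (\<lambda>i. - v i) t"
  unfolding blend_def by (simp add: sum_negf)

lemma blend_sum: "finite A \<Longrightarrow> (\<Sum>k\<in>A. blend j (w k) t) = blend j (\<lambda>i. \<Sum>k\<in>A. w k i) t"
  unfolding blend_def by (simp add: scaleR_sum_right sum.swap[of _ A])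

lemma blend_cong: "(\<And>i. i \<in> I \<Longrightarrow> v i = w i) \<Longrightarrow> blend j v t = blend j w t"
  unfolding blend_def by (rule sum.cong) auto

lemma blend_adjoint:
  fixes h :: "'x \<Rightarrow> 'h::{real_inner,banach,second_countable_topology}"
  assumes j: "j \<in> {1..d}" and h: "square_integrable j h"
  shows "(\<Sum>i\<in>I. a * inner (local_mean j i h) (v i)) = (\<Sum>l\<in>I. a * local_inner j l h (blend j v))"
proof -
  have "(\<Sum>l\<in>I. a * local_inner j l h (blend j v))
      = (\<integral>t. (\<Sum>l\<in>I. a * (\<kappa> j l t * inner (h t) (blend j v t))) \<partial>M j)"
    unfolding local_inner_def using integrable_kernel_inner[OF j _ h square_integrable_blend[OF j]]
    by simp
  also have "\<dots> = (\<integral>t. (\<Sum>i\<in>I. a * (\<kappa> j i t * inner (h t) (v i))) \<partial>M j)"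
  proof (rule Bochner_Integration.integral_cong[OF refl])
    fix t assume t: "t \<in> space (M j)"
    have "(\<Sum>l\<in>I. a * (\<kappa> j l t * inner (h t) (blend j v t)))
        = (\<Sum>l\<in>I. \<Sum>i\<in>I. a * (\<kappa> j l t * weight j i t) * inner (h t) (v i))"
      unfolding blend_def by (simp add: inner_sum_right sum_distrib_left mult.assoc)
    also have "\<dots> = (\<Sum>i\<in>I. a * (\<Sum>l\<in>I. \<kappa> j l t * weight j i t) * inner (h t) (v i))"
      by (subst sum.swap) (simp add: sum_distrib_left sum_distrib_right)
    finally show "(\<Sum>l\<in>I. a * (\<kappa> j l t * inner (h t) (blend j v t))) = (\<Sum>i\<in>I. a * (\<kappa> j i t * inner (h t) (v i)))"
      by (simp add: kernel_times_weight_sum[OF j t] mult.assoc)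
  qed
  also have "\<dots> = (\<Sum>i\<in>I. a * (\<integral>t. inner (\<kappa> j i t *\<^sub>R h t) (v i) \<partial>M j))"
    using integrable_kernel_inner[OF j _ h square_integrable_const[OF j]] by simp
  also have "\<dots> = (\<Sum>i\<in>I. a * inner (local_mean j i h) (v i))"
    unfolding local_mean_def using integrable_kernel_scaleR[OF j _ h]
    by (intro sum.cong refl) (subst integral_inner_left, auto)
  finally show ?thesis by simp
qed

lemma sum_local_mean_blend:
  fixes v :: "nat \<Rightarrow> 'h::{real_inner,banach,second_countable_topology}"
  assumes k: "k \<in> {1..d}"
  shows "(\<Sum>i\<in>I. local_mean k i (blend k v)) = (\<Sum>l\<in>I. v l)"
proof -
  have int: "integrable (M k) (\<lambda>t. \<kappa> k i t * weight k l t)" if "i \<in> I" "l \<in> I" for i l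
    using that weight_nonneg[OF k] weight_le_one[OF k] k
    by (intro integrable_kernel_mult_dominated[OF k, where u="\<lambda>_. 1"] weight_measurable)
       (auto intro: finite_measure.integrable_const[OF finite_M[OF k]])
  have "local_mean k i (blend k v) = (\<Sum>l\<in>I. (\<integral>t. \<kappa> k i t * weight k l t \<partial>M k) *\<^sub>R v l)"
    if i: "i \<in> I" for i
  proof -
    have "local_mean k i (blend k v) = (\<integral>t. (\<Sum>l\<in>I. (\<kappa> k i t * weight k l t) *\<^sub>R v l) \<partial>M k)"
      unfolding local_mean_def blend_def by (simp add: scaleR_sum_right)
    also have "\<dots> = (\<Sum>l\<in>I. (\<integral>t. (\<kappa> k i t * weight k l t) *\<^sub>R v l \<partial>M k))"
      by (rule Bochner_Integration.integral_sum) (use int[OF i] in auto)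
    also have "\<dots> = (\<Sum>l\<in>I. (\<integral>t. \<kappa> k i t * weight k l t \<partial>M k) *\<^sub>R v l)"
      using int[OF i] by (auto intro!: sum.cong integral_scaleR_left)
    finally show ?thesis .
  qed
  then have "(\<Sum>i\<in>I. local_mean k i (blend k v))
      = (\<Sum>i\<in>I. \<Sum>l\<in>I. (\<integral>t. \<kappa> k i t * weight k l t \<partial>M k) *\<^sub>R v l)"
    by simp
  also have "\<dots> = (\<Sum>l\<in>I. (\<Sum>i\<in>I. (\<integral>t. \<kappa> k i t * weight k l t \<partial>M k)) *\<^sub>R v l)"
    by (subst sum.swap) (simp add: scaleR_sum_left)
  also have "\<dots> = (\<Sum>l\<in>I. v l)"
  proof (rule sum.cong[OF refl])
    fix l assume l: "l \<in> I"
    have "(\<Sum>i\<in>I. (\<integral>t. \<kappa> k i t * weight k l t \<partial>M k)) = (\<integral>t. (\<Sum>i\<in>I. \<kappa> k i t * weight k l t) \<partial>M k)"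
      by (rule Bochner_Integration.integral_sum[symmetric]) (use int l in auto)
    also have "\<dots> = (\<integral>t. \<kappa> k l t \<partial>M k)"
      by (rule Bochner_Integration.integral_cong[OF refl]) (use kernel_times_weight_sum[OF k] in auto)
    finally show "(\<Sum>i\<in>I. (\<integral>t. \<kappa> k i t * weight k l t \<partial>M k)) *\<^sub>R v l = v l"
      using kernel_integral[OF k l] by simp
  qed
  finally show ?thesis .
qed

lemma energy_cong:
  assumes "\<And>k t. k \<in> {1..d} \<Longrightarrow> t \<in> space (M k) \<Longrightarrow> G' k t = G k t"
  shows "energy G' = energy G"
proof -
  have "\<And>k i. k \<in> {1..d} \<Longrightarrow> local_mean k i (G' k) = local_mean k i (G k)"
    using assms by (auto intro: local_mean_cong)
  moreover have "\<And>k i. k \<in> {1..d} \<Longrightarrow> local_inner k i (G' k) (G' k) = local_inner k i (G k) (G k)"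
    using assms by (auto intro: local_inner_cong)
  ultimately show ?thesis unfolding energy_def by simp
qed

lemma sum_local_variance_nonneg:
  assumes "\<And>k. k \<in> {1..d} \<Longrightarrow> square_integrable k (G k)" and "i \<in> I" and "J \<subseteq> {1..d}"
  shows "0 \<le> (\<Sum>k\<in>J. local_inner k i (G k) (G k) - (norm (local_mean k i (G k)))\<^sup>2)"
proof (intro sum_nonneg)
  fix k assume "k \<in> J"
  then have k: "k \<in> {1..d}" using assms(3) by blast
  show "0 \<le> local_inner k i (G k) (G k) - (norm (local_mean k i (G k)))\<^sup>2"
    using local_variance_nonneg[OF k assms(2) assms(1)[OF k]] by simp
qed

lemma energy_nonneg:
  assumes "\<And>k. k \<in> {1..d} \<Longrightarrow> square_integrable k (G k)"
  shows "0 \<le> energy G"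
  unfolding energy_def using sum_local_variance_nonneg[OF assms] a_pos
  by (intro sum_nonneg) auto

lemma energy_term_le_energy:
  assumes G: "\<And>k. k \<in> {1..d} \<Longrightarrow> square_integrable k (G k)" and i: "i \<in> I"
  shows "a * ((\<Sum>k\<in>{1..d}. local_inner k i (G k) (G k) - (norm (local_mean k i (G k)))\<^sup>2)
             + (norm (\<Sum>k\<in>{1..d}. local_mean k i (G k)))\<^sup>2) \<le> energy G"
  unfolding energy_def using sum_local_variance_nonneg[OF G] a_pos finite_I i
  by (intro member_le_sum[OF i]) auto

lemma local_variance_le_energy:
  assumes G: "\<And>k. k \<in> {1..d} \<Longrightarrow> square_integrable k (G k)" and k: "k \<in> {1..d}" and i: "i \<in> I"
  shows "a * (local_inner k i (G k) (G k) - (norm (local_mean k i (G k)))\<^sup>2) \<le> energy G"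
proof -
  have "local_inner k i (G k) (G k) - (norm (local_mean k i (G k)))\<^sup>2
      \<le> (\<Sum>k\<in>{1..d}. local_inner k i (G k) (G k) - (norm (local_mean k i (G k)))\<^sup>2)"
    using local_variance_nonneg G i k by (intro member_le_sum[OF k]) auto
  then have "local_inner k i (G k) (G k) - (norm (local_mean k i (G k)))\<^sup>2
      \<le> (\<Sum>k\<in>{1..d}. local_inner k i (G k) (G k) - (norm (local_mean k i (G k)))\<^sup>2)
             + (norm (\<Sum>k\<in>{1..d}. local_mean k i (G k)))\<^sup>2"
    using zero_le_power2[of "norm (\<Sum>k\<in>{1..d}. local_mean k i (G k))"] by linarith
  then have "a * (local_inner k i (G k) (G k) - (norm (local_mean k i (G k)))\<^sup>2)
      \<le> a * ((\<Sum>k\<in>{1..d}. local_inner k i (G k) (G k) - (norm (local_mean k i (G k)))\<^sup>2)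
             + (norm (\<Sum>k\<in>{1..d}. local_mean k i (G k)))\<^sup>2)"
    by (rule mult_left_mono) (use a_pos in simp)
  then show ?thesis using energy_term_le_energy[OF G i] by linarith
qed

lemma norm_sum_local_mean_le_energy:
  assumes G: "\<And>k. k \<in> {1..d} \<Longrightarrow> square_integrable k (G k)" and i: "i \<in> I"
  shows "a * (norm (\<Sum>k\<in>{1..d}. local_mean k i (G k)))\<^sup>2 \<le> energy G"
proof -
  have "a * (norm (\<Sum>k\<in>{1..d}. local_mean k i (G k)))\<^sup>2
      \<le> a * ((\<Sum>k\<in>{1..d}. local_inner k i (G k) (G k) - (norm (local_mean k i (G k)))\<^sup>2)
             + (norm (\<Sum>k\<in>{1..d}. local_mean k i (G k)))\<^sup>2)"
    using sum_local_variance_nonneg[OF G i order_refl] a_pos by (intro mult_left_mono) simp_all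
  then show ?thesis using energy_term_le_energy[OF G i] by linarith
qed

definition other_means :: "nat \<Rightarrow> (nat \<Rightarrow> 'x \<Rightarrow> 'h::{banach,second_countable_topology}) \<Rightarrow> nat \<Rightarrow> 'h" where
  "other_means j G i = (\<Sum>k\<in>{1..d}-{j}. local_mean k i (G k))"

definition energy_without :: "nat \<Rightarrow> (nat \<Rightarrow> 'x \<Rightarrow> 'h::{real_inner,banach,second_countable_topology}) \<Rightarrow> real" where
  "energy_without j G = (\<Sum>i\<in>I. a * ((\<Sum>k\<in>{1..d}-{j}. local_inner k i (G k) (G k) - (norm (local_mean k i (G k)))\<^sup>2)
                                        + (norm (other_means j G i))\<^sup>2))"

lemma other_means_upd: "other_means j (G(j := g)) = other_means j G"
  unfolding other_means_def by (intro ext sum.cong) auto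

lemma energy_without_upd: "energy_without j (G(j := g)) = energy_without j G"
  unfolding energy_without_def other_means_upd by (intro sum.cong refl arg_cong2[where f="(+)"] arg_cong[where f="\<lambda>x. a * x"] sum.cong) auto

lemma energy_split:
  assumes j: "j \<in> {1..d}"
  shows "energy G = (\<Sum>i\<in>I. a * (local_inner j i (G j) (G j) + 2 * inner (local_mean j i (G j)) (other_means j G i)))
                    + energy_without j G"
proof -
  have "a * ((\<Sum>k\<in>{1..d}. local_inner k i (G k) (G k) - (norm (local_mean k i (G k)))\<^sup>2)
               + (norm (\<Sum>k\<in>{1..d}. local_mean k i (G k)))\<^sup>2)
      = a * (local_inner j i (G j) (G j) + 2 * inner (local_mean j i (G j)) (other_means j G i))
        + a * ((\<Sum>k\<in>{1..d}-{j}. local_inner k i (G k) (G k) - (norm (local_mean k i (G k)))\<^sup>2)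
               + (norm (other_means j G i))\<^sup>2)" for i
  proof -
    have s1: "(\<Sum>k\<in>{1..d}. local_inner k i (G k) (G k) - (norm (local_mean k i (G k)))\<^sup>2)
        = (local_inner j i (G j) (G j) - (norm (local_mean j i (G j)))\<^sup>2)
          + (\<Sum>k\<in>{1..d}-{j}. local_inner k i (G k) (G k) - (norm (local_mean k i (G k)))\<^sup>2)"
      using j by (simp add: sum.remove)
    have s2: "(\<Sum>k\<in>{1..d}. local_mean k i (G k)) = local_mean j i (G j) + other_means j G i"
      unfolding other_means_def using j by (simp add: sum.remove)
    have s3: "(norm (local_mean j i (G j) + other_means j G i))\<^sup>2
        = (norm (local_mean j i (G j)))\<^sup>2 + 2 * inner (local_mean j i (G j)) (other_means j G i)
          + (norm (other_means j G i))\<^sup>2"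
      by (simp add: power2_norm_eq_inner inner_add_left inner_add_right inner_commute)
    show ?thesis unfolding s1 s2 s3 by (simp add: algebra_simps)
  qed
  then show ?thesis unfolding energy_def energy_without_def by (simp add: sum.distrib)
qed

text \<open>Replacing the \<open>j\<close>-th component by its optimal value \<open>-blend j (other_means j G)\<close>
  lowers the energy by exactly the squared \<open>L\<^sup>2(p\<^sub>j)\<close>-distance travelled (Pythagoras).\<close>

lemma energy_update:
  fixes G :: "nat \<Rightarrow> 'x \<Rightarrow> 'h::{real_inner,banach,second_countable_topology}"
  assumes j: "j \<in> {1..d}" and G: "\<And>k. k \<in> {1..d} \<Longrightarrow> square_integrable k (G k)"
    and g': "\<And>t. t \<in> space (M j) \<Longrightarrow> g' t = blend j (\<lambda>i. - other_means j G i) t"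
  shows "energy G = energy (G(j := g')) + marginal_norm2 j (\<lambda>t. G j t - g' t)"
proof -
  have gg: "square_integrable j (G j)" using G j by auto
  have gg': "square_integrable j g'" by (rule square_integrable_cong[OF square_integrable_blend[OF j]]) (use g' in auto)
  have cross: "(\<Sum>i\<in>I. a * inner (local_mean j i h) (other_means j G i)) = - (\<Sum>l\<in>I. a * local_inner j l h g')"
    if h: "square_integrable j h" for h
  proof -
    have "(\<Sum>i\<in>I. a * inner (local_mean j i h) (- other_means j G i))
        = (\<Sum>l\<in>I. a * local_inner j l h (blend j (\<lambda>i. - other_means j G i)))"
      by (rule blend_adjoint[OF j h])
    also have "\<dots> = (\<Sum>l\<in>I. a * local_inner j l h g')"
      using g' by (intro sum.cong refl arg_cong[where f="\<lambda>x. a * x"] local_inner_cong) auto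
    finally show ?thesis by (simp add: sum_negf)
  qed
  have "energy G = marginal_norm2 j (G j) - 2 * (\<Sum>l\<in>I. a * local_inner j l (G j) g') + energy_without j G"
  proof -
    have "energy G = (\<Sum>i\<in>I. a * local_inner j i (G j) (G j))
        + 2 * (\<Sum>i\<in>I. a * inner (local_mean j i (G j)) (other_means j G i)) + energy_without j G"
      by (subst energy_split[OF j]) (simp add: sum.distrib sum_distrib_left algebra_simps)
    then show ?thesis using cross[OF gg] unfolding marginal_norm2_def by simp
  qed
  moreover have "energy (G(j := g')) = marginal_norm2 j g' - 2 * (\<Sum>l\<in>I. a * local_inner j l g' g') + energy_without j G"
  proof -
    have "energy (G(j := g')) = (\<Sum>i\<in>I. a * local_inner j i g' g')
        + 2 * (\<Sum>i\<in>I. a * inner (local_mean j i g') (other_means j G i)) + energy_without j G"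
      by (subst energy_split[OF j]) (simp add: sum.distrib sum_distrib_left algebra_simps other_means_upd energy_without_upd)
    then show ?thesis using cross[OF gg'] unfolding marginal_norm2_def by simp
  qed
  ultimately show ?thesis using marginal_norm2_diff[OF j gg gg'] unfolding marginal_norm2_def by simp
qed

section \<open>The backfitting sweep\<close>

text \<open>One cycle of the backfitting algorithm, for the errors \<open>G r k = F r k - f k\<close>,
  in which the common term \<open>m\<^sub>j - f\<^sub>0\<close> cancels.\<close>

definition sweep :: "(nat \<Rightarrow> 'x \<Rightarrow> 'h::{banach,second_countable_topology}) \<Rightarrow> (nat \<Rightarrow> 'x \<Rightarrow> 'h) \<Rightarrow> bool" where
  "sweep G G' \<longleftrightarrow> (\<forall>j\<in>{1..d}. \<forall>t\<in>space (M j). G' j t =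
     blend j (\<lambda>i. - ((\<Sum>k\<in>{1..<j}. local_mean k i (G' k)) + (\<Sum>k\<in>{j<..d}. local_mean k i (G k)))) t)"

lemma sweep_square_integrable: "sweep G G' \<Longrightarrow> j \<in> {1..d} \<Longrightarrow> square_integrable j (G' j)"
  unfolding sweep_def by (auto intro: square_integrable_cong[OF square_integrable_blend])

lemma sweep_centered:
  fixes G :: "nat \<Rightarrow> 'x \<Rightarrow> 'h::{real_inner,banach,second_countable_topology}"
  assumes sw: "sweep G G'" and G: "\<And>k. k \<in> {1..d} \<Longrightarrow> centered k (G k)"
  shows "j \<in> {1..d} \<Longrightarrow> centered j (G' j)"
proof (induction j rule: less_induct)
  case (less j)
  let ?v = "\<lambda>i. - ((\<Sum>k\<in>{1..<j}. local_mean k i (G' k)) + (\<Sum>k\<in>{j<..d}. local_mean k i (G k)))"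
  have "(\<Sum>i\<in>I. local_mean j i (G' j)) = (\<Sum>i\<in>I. local_mean j i (blend j ?v))"
    using sw less.prems by (intro sum.cong refl local_mean_cong) (auto simp: sweep_def)
  also have "\<dots> = (\<Sum>i\<in>I. ?v i)" by (rule sum_local_mean_blend[OF less.prems])
  also have "\<dots> = - ((\<Sum>k\<in>{1..<j}. \<Sum>i\<in>I. local_mean k i (G' k)) + (\<Sum>k\<in>{j<..d}. \<Sum>i\<in>I. local_mean k i (G k)))"
    by (simp only: sum_negf sum.distrib sum.swap[of _ I])
  also have "\<dots> = 0"
    using less.IH less.prems G by (simp add: centered_def)
  finally show ?case unfolding centered_def .
qed

lemma energy_sweep:
  fixes G :: "nat \<Rightarrow> 'x \<Rightarrow> 'h::{real_inner,banach,second_countable_topology}"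
  assumes sw: "sweep G G'" and G: "\<And>k. k \<in> {1..d} \<Longrightarrow> square_integrable k (G k)"
  shows "energy G = energy G' + (\<Sum>j\<in>{1..d}. marginal_norm2 j (\<lambda>t. G j t - G' j t))"
proof -
  define H where "H s = (\<lambda>k. if k \<le> s then G' k else G k)" for s
  have H: "\<And>s k. k \<in> {1..d} \<Longrightarrow> square_integrable k (H s k)"
    unfolding H_def using G sweep_square_integrable[OF sw] by auto
  have "s \<le> d \<Longrightarrow> energy G = energy (H s) + (\<Sum>j\<in>{1..s}. marginal_norm2 j (\<lambda>t. G j t - G' j t))" for s
  proof (induction s)
    case 0
    show ?case by (simp, rule energy_cong[symmetric]) (auto simp: H_def)
  next
    case (Suc s)
    have j: "Suc s \<in> {1..d}" using Suc.prems by auto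
    have upd: "H (Suc s) = (H s)(Suc s := G' (Suc s))" unfolding H_def by (rule ext) auto
    have "other_means (Suc s) (H s) i
        = (\<Sum>k\<in>{1..<Suc s}. local_mean k i (G' k)) + (\<Sum>k\<in>{Suc s<..d}. local_mean k i (G k))" for i
      unfolding other_means_def sum_atLeastAtMost_remove_split[OF j] H_def
      by (intro arg_cong2[where f="(+)"] sum.cong refl) auto
    then have "energy (H s) = energy (H (Suc s)) + marginal_norm2 (Suc s) (\<lambda>t. H s (Suc s) t - G' (Suc s) t)"
      unfolding upd using H sw j by (intro energy_update) (auto simp: sweep_def)
    then show ?case using Suc by (simp add: H_def)
  qed
  moreover have "energy (H d) = energy G'" by (rule energy_cong) (auto simp: H_def)
  ultimately show ?thesis by (metis order_refl)
qed

lemma energy_sweep_le: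
  fixes G :: "nat \<Rightarrow> 'x \<Rightarrow> 'h::{real_inner,banach,second_countable_topology}"
  assumes "sweep G G'" and "\<And>k. k \<in> {1..d} \<Longrightarrow> square_integrable k (G k)"
  shows "energy G' \<le> energy G"
proof -
  have "0 \<le> (\<Sum>j\<in>{1..d}. marginal_norm2 j (\<lambda>t. G j t - G' j t))"
    by (intro sum_nonneg marginal_norm2_nonneg) simp
  then show ?thesis using energy_sweep[OF assms] by linarith
qed

definition admissible :: "(nat \<Rightarrow> 'x \<Rightarrow> 'h::{banach,second_countable_topology}) \<Rightarrow> bool" where
  "admissible G \<longleftrightarrow> (\<forall>k\<in>{1..d}. square_integrable k (G k) \<and> centered k (G k))"

lemma admissible_square_integrable: "admissible G \<Longrightarrow> k \<in> {1..d} \<Longrightarrow> square_integrable k (G k)"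
  by (simp add: admissible_def)

lemma admissible_diff:
  fixes G H :: "nat \<Rightarrow> 'x \<Rightarrow> 'h::{real_inner,banach,second_countable_topology}"
  assumes "admissible G" "admissible H"
  shows "admissible (\<lambda>k t. G k t - H k t)"
  using assms by (auto simp: admissible_def centered_def local_mean_diff sum_subtractf intro: square_integrable_diff)

lemma sweep_admissible:
  fixes G :: "nat \<Rightarrow> 'x \<Rightarrow> 'h::{real_inner,banach,second_countable_topology}"
  shows "sweep G G' \<Longrightarrow> admissible G \<Longrightarrow> admissible G'"
  unfolding admissible_def using sweep_square_integrable sweep_centered by blast

lemma sweep_local_inner_self:
  fixes G :: "nat \<Rightarrow> 'x \<Rightarrow> 'h::{real_inner,banach,second_countable_topology}"
  assumes sw: "sweep G G'" and j: "j \<in> {1..d}"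
  shows "(\<Sum>i\<in>I. a * local_inner j i (G' j) (G' j))
           = (\<Sum>i\<in>I. a * inner (local_mean j i (G' j))
                 (- ((\<Sum>k\<in>{1..<j}. local_mean k i (G' k)) + (\<Sum>k\<in>{j<..d}. local_mean k i (G k)))))"
proof -
  let ?v = "\<lambda>i. - ((\<Sum>k\<in>{1..<j}. local_mean k i (G' k)) + (\<Sum>k\<in>{j<..d}. local_mean k i (G k)))"
  have "(\<Sum>i\<in>I. a * inner (local_mean j i (G' j)) (?v i)) = (\<Sum>l\<in>I. a * local_inner j l (G' j) (blend j ?v))"
    by (rule blend_adjoint[OF j sweep_square_integrable[OF sw j]])
  also have "\<dots> = (\<Sum>l\<in>I. a * local_inner j l (G' j) (G' j))"
    using sw j by (intro sum.cong refl arg_cong[where f="\<lambda>x. a * x"] local_inner_cong) (auto simp: sweep_def)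
  finally show ?thesis by simp
qed

lemma energy_after_sweep:
  fixes G :: "nat \<Rightarrow> 'x \<Rightarrow> 'h::{real_inner,banach,second_countable_topology}"
  assumes sw: "sweep G G'"
  shows "energy G' = (\<Sum>i\<in>I. a * (\<Sum>j\<in>{1..d}. inner (local_mean j i (G' j))
                         (\<Sum>k\<in>{j<..d}. local_mean k i (G' k) - local_mean k i (G k))))"
proof -
  let ?x = "\<lambda>i k. local_mean k i (G' k)" and ?y = "\<lambda>i k. local_mean k i (G k)"
  define R where "R i j = (\<Sum>k\<in>{1..<j}. ?x i k) + (\<Sum>k\<in>{j<..d}. ?y i k)" for i j
  have "energy G' = (\<Sum>i\<in>I. a * (\<Sum>j\<in>{1..d}. local_inner j i (G' j) (G' j)))
      + (\<Sum>i\<in>I. a * ((norm (\<Sum>k\<in>{1..d}. ?x i k))\<^sup>2 - (\<Sum>j\<in>{1..d}. (norm (?x i j))\<^sup>2)))"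
    unfolding energy_def by (simp add: sum_subtractf algebra_simps sum.distrib)
  also have "(\<Sum>i\<in>I. a * (\<Sum>j\<in>{1..d}. local_inner j i (G' j) (G' j)))
      = (\<Sum>i\<in>I. a * (\<Sum>j\<in>{1..d}. inner (?x i j) (- R i j)))"
  proof -
    have "(\<Sum>i\<in>I. a * (\<Sum>j\<in>{1..d}. local_inner j i (G' j) (G' j)))
        = (\<Sum>j\<in>{1..d}. \<Sum>i\<in>I. a * local_inner j i (G' j) (G' j))"
      by (simp only: sum_distrib_left) (rule sum.swap)
    also have "\<dots> = (\<Sum>j\<in>{1..d}. \<Sum>i\<in>I. a * inner (?x i j) (- R i j))"
      unfolding R_def by (rule sum.cong[OF refl]) (rule sweep_local_inner_self[OF sw])
    also have "\<dots> = (\<Sum>i\<in>I. a * (\<Sum>j\<in>{1..d}. inner (?x i j) (- R i j)))"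
      by (simp only: sum_distrib_left) (rule sum.swap)
    finally show ?thesis .
  qed
  also have "(\<Sum>i\<in>I. a * ((norm (\<Sum>k\<in>{1..d}. ?x i k))\<^sup>2 - (\<Sum>j\<in>{1..d}. (norm (?x i j))\<^sup>2)))
      = (\<Sum>i\<in>I. a * (\<Sum>j\<in>{1..d}. inner (?x i j) ((\<Sum>k\<in>{1..<j}. ?x i k) + (\<Sum>k\<in>{j<..d}. ?x i k))))"
    unfolding power2_norm_sum_eq by (simp add: sum.distrib)
  finally have e: "energy G' = (\<Sum>i\<in>I. a * ((\<Sum>j\<in>{1..d}. inner (?x i j) (- R i j))
      + (\<Sum>j\<in>{1..d}. inner (?x i j) ((\<Sum>k\<in>{1..<j}. ?x i k) + (\<Sum>k\<in>{j<..d}. ?x i k)))))"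
    by (simp only: sum.distrib distrib_left)
  show ?thesis unfolding e R_def
    by (intro sum.cong refl arg_cong[where f="\<lambda>x. a * x"], subst sum.distrib[symmetric], rule sum.cong[OF refl],
        simp only: sum_subtractf inner_add_right inner_diff_right inner_minus_right)
qed

lemma norm_local_mean_sq_le_marginal_norm2:
  fixes g :: "'x \<Rightarrow> 'h::{real_inner,banach,second_countable_topology}"
  assumes "k \<in> {1..d}" "i \<in> I" "square_integrable k g"
  shows "a * (norm (local_mean k i g))\<^sup>2 \<le> marginal_norm2 k g"
proof -
  have "a * (norm (local_mean k i g))\<^sup>2 \<le> a * local_inner k i g g"
    using local_variance_nonneg[OF assms] a_pos by simp
  then show ?thesis using local_inner_le_marginal_norm2[OF assms(1,2), of g] by linarith
qed

lemma norm_local_mean_diff_le: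
  fixes g g' :: "'x \<Rightarrow> 'h::{real_inner,banach,second_countable_topology}"
  assumes k: "k \<in> {1..d}" and i: "i \<in> I" and g: "square_integrable k g" and g': "square_integrable k g'"
  shows "norm (local_mean k i g' - local_mean k i g) \<le> sqrt (marginal_norm2 k (\<lambda>t. g t - g' t)) / sqrt a"
proof -
  have "a * (norm (local_mean k i (\<lambda>t. g t - g' t)))\<^sup>2 \<le> marginal_norm2 k (\<lambda>t. g t - g' t)"
    by (rule norm_local_mean_sq_le_marginal_norm2[OF k i square_integrable_diff[OF g g']])
  then have "(norm (local_mean k i g' - local_mean k i g))\<^sup>2 \<le> marginal_norm2 k (\<lambda>t. g t - g' t) / a"
    using a_pos by (simp add: local_mean_diff[OF k i g g'] norm_minus_commute field_simps)
  then have "norm (local_mean k i g' - local_mean k i g) \<le> sqrt (marginal_norm2 k (\<lambda>t. g t - g' t) / a)"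
    by (rule real_le_rsqrt)
  then show ?thesis by (simp add: real_sqrt_divide)
qed

lemma le_sqrt_mult_imp_le_square:
  fixes x y C :: real
  assumes x: "0 \<le> x" and y: "0 \<le> y" and le: "x \<le> C * sqrt x * sqrt y"
  shows "x \<le> C\<^sup>2 * y"
proof (cases "x = 0")
  case True then show ?thesis using y by simp
next
  case False
  then have pos: "0 < sqrt x" using x by simp
  have "sqrt x * sqrt x \<le> (C * sqrt y) * sqrt x" using le x by (simp add: mult_ac)
  then have "sqrt x \<le> C * sqrt y" using pos by (simp only: mult_le_cancel_right_pos)
  then have "(sqrt x)\<^sup>2 \<le> (C * sqrt y)\<^sup>2" using pos by (intro power_mono) auto
  then show ?thesis using x y by (simp add: power_mult_distrib)
qed

lemma energy_after_sweep_le: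
  fixes G G' :: "nat \<Rightarrow> 'x \<Rightarrow> 'h::{real_inner,banach,second_countable_topology}"
  assumes K0: "0 \<le> K0"
    and coercive: "\<And>(H :: nat \<Rightarrow> 'x \<Rightarrow> 'h) k i. admissible H \<Longrightarrow> k \<in> {1..d} \<Longrightarrow> i \<in> I \<Longrightarrow>
                      norm (local_mean k i (H k)) \<le> K0 * sqrt (energy H)"
    and sw: "sweep G G'" and G: "admissible G"
  shows "energy G' \<le> real (card I) * real d ^ 2 * K0 * sqrt a * sqrt (energy G')
                        * sqrt (\<Sum>j\<in>{1..d}. marginal_norm2 j (\<lambda>t. G j t - G' j t))"
proof -
  have sqG: "\<And>k. k \<in> {1..d} \<Longrightarrow> square_integrable k (G k)" using G by (rule admissible_square_integrable)
  have G': "admissible G'" by (rule sweep_admissible[OF sw G])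
  define D where "D = (\<Sum>j\<in>{1..d}. marginal_norm2 j (\<lambda>t. G j t - G' j t))"
  have E'nn: "0 \<le> energy G'" using G' by (intro energy_nonneg admissible_square_integrable)
  have Dnn: "0 \<le> D" unfolding D_def by (intro sum_nonneg marginal_norm2_nonneg) simp
  have step: "norm (local_mean k i (G' k) - local_mean k i (G k)) \<le> sqrt D / sqrt a"
    if k: "k \<in> {1..d}" and i: "i \<in> I" for k i
  proof -
    have "marginal_norm2 k (\<lambda>t. G k t - G' k t) \<le> D"
      unfolding D_def using k by (intro member_le_sum) (auto intro: marginal_norm2_nonneg)
    then have "sqrt (marginal_norm2 k (\<lambda>t. G k t - G' k t)) / sqrt a \<le> sqrt D / sqrt a"
      using a_pos by (intro divide_right_mono real_sqrt_le_mono) simp_all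
    then show ?thesis
      using norm_local_mean_diff_le[OF k i sqG[OF k] admissible_square_integrable[OF G' k]] by linarith
  qed
  have summand: "inner (local_mean j i (G' j)) (\<Sum>k\<in>{j<..d}. local_mean k i (G' k) - local_mean k i (G k))
       \<le> K0 * sqrt (energy G') * (real d * (sqrt D / sqrt a))" if j: "j \<in> {1..d}" and i: "i \<in> I" for j i
  proof -
    have "norm (\<Sum>k\<in>{j<..d}. local_mean k i (G' k) - local_mean k i (G k))
        \<le> (\<Sum>k\<in>{j<..d}. norm (local_mean k i (G' k) - local_mean k i (G k)))" by (rule norm_sum)
    also have "\<dots> \<le> real (card {j<..d}) * (sqrt D / sqrt a)" using step i j by (intro sum_bounded_above) auto
    also have "\<dots> \<le> real d * (sqrt D / sqrt a)" using Dnn a_pos by (intro mult_right_mono) auto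
    finally have "norm (\<Sum>k\<in>{j<..d}. local_mean k i (G' k) - local_mean k i (G k)) \<le> real d * (sqrt D / sqrt a)" .
    then have "norm (local_mean j i (G' j)) * norm (\<Sum>k\<in>{j<..d}. local_mean k i (G' k) - local_mean k i (G k))
        \<le> K0 * sqrt (energy G') * (real d * (sqrt D / sqrt a))"
      using coercive[OF G' j i] K0 E'nn by (intro mult_mono) auto
    then show ?thesis using norm_cauchy_schwarz order_trans by blast
  qed
  have "energy G' = (\<Sum>i\<in>I. a * (\<Sum>j\<in>{1..d}. inner (local_mean j i (G' j))
                         (\<Sum>k\<in>{j<..d}. local_mean k i (G' k) - local_mean k i (G k))))"
    by (rule energy_after_sweep[OF sw])
  also have "\<dots> \<le> real (card I) * (a * (real d * (K0 * sqrt (energy G') * (real d * (sqrt D / sqrt a)))))"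
  proof (rule sum_bounded_above)
    fix i assume i: "i \<in> I"
    have "(\<Sum>j\<in>{1..d}. inner (local_mean j i (G' j)) (\<Sum>k\<in>{j<..d}. local_mean k i (G' k) - local_mean k i (G k)))
        \<le> real (card {1..d}) * (K0 * sqrt (energy G') * (real d * (sqrt D / sqrt a)))"
      using summand i by (intro sum_bounded_above) auto
    then show "a * (\<Sum>j\<in>{1..d}. inner (local_mean j i (G' j)) (\<Sum>k\<in>{j<..d}. local_mean k i (G' k) - local_mean k i (G k)))
        \<le> a * (real d * (K0 * sqrt (energy G') * (real d * (sqrt D / sqrt a))))"
      using a_pos by (intro mult_left_mono) auto
  qed
  also have "\<dots> = real (card I) * real d ^ 2 * K0 * sqrt a * sqrt (energy G') * sqrt D"
    using real_div_sqrt[of a] a_pos by (simp add: field_simps power2_eq_square)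
  finally show ?thesis unfolding D_def .
qed

text \<open>With \<open>D\<close> the energy removed by the sweep, \<open>energy G = energy G' + D\<close> and
  \<open>energy G' \<le> C \<surd>(energy G') \<surd>D\<close> give \<open>energy G' \<le> C\<^sup>2 D\<close>.\<close>

lemma energy_sweep_contract:
  fixes G G' :: "nat \<Rightarrow> 'x \<Rightarrow> 'h::{real_inner,banach,second_countable_topology}"
  assumes K0: "0 \<le> K0"
    and coercive: "\<And>(H :: nat \<Rightarrow> 'x \<Rightarrow> 'h) k i. admissible H \<Longrightarrow> k \<in> {1..d} \<Longrightarrow> i \<in> I \<Longrightarrow>
                      norm (local_mean k i (H k)) \<le> K0 * sqrt (energy H)"
    and sw: "sweep G G'" and G: "admissible G"
  defines "C \<equiv> real (card I) * real d ^ 2 * K0 * sqrt a"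
  shows "energy G' \<le> C\<^sup>2 / (1 + C\<^sup>2) * energy G"
proof -
  define D where "D = (\<Sum>j\<in>{1..d}. marginal_norm2 j (\<lambda>t. G j t - G' j t))"
  have ED: "energy G = energy G' + D"
    unfolding D_def by (rule energy_sweep[OF sw admissible_square_integrable[OF G]])
  have E'nn: "0 \<le> energy G'" using sweep_admissible[OF sw G] by (intro energy_nonneg admissible_square_integrable)
  have Dnn: "0 \<le> D" unfolding D_def by (intro sum_nonneg marginal_norm2_nonneg) simp
  have "energy G' \<le> C * sqrt (energy G') * sqrt D"
    unfolding C_def D_def by (rule energy_after_sweep_le[OF K0 coercive sw G])
  then have "energy G' \<le> C\<^sup>2 * D" by (rule le_sqrt_mult_imp_le_square[OF E'nn Dnn])
  then have "(1 + C\<^sup>2) * energy G' \<le> C\<^sup>2 * energy G" using ED by (simp add: algebra_simps)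
  then show ?thesis by (simp add: field_simps add_pos_nonneg)
qed

section \<open>Coercivity of the local means\<close>

definition kernel_support :: "nat \<Rightarrow> nat \<Rightarrow> 'x set" where
  "kernel_support m i = {t \<in> space (M m). 0 < \<kappa> m i t}"

definition overlap :: "nat \<Rightarrow> nat \<Rightarrow> nat \<Rightarrow> real" where
  "overlap m i i' = (\<integral>t. min (\<kappa> m i t) (\<kappa> m i' t) \<partial>M m)"

lemma kernel_support_sets: "m \<in> {1..d} \<Longrightarrow> i \<in> I \<Longrightarrow> kernel_support m i \<in> sets (M m)"
  unfolding kernel_support_def using kernel_measurable by measurable

lemma kernel_support_pos:
  assumes m: "m \<in> {1..d}" and i: "i \<in> I"
  shows "0 < emeasure (M m) (kernel_support m i)"
proof (rule ccontr)
  assume "\<not> 0 < emeasure (M m) (kernel_support m i)"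
  then have "AE t in M m. t \<notin> kernel_support m i"
    using kernel_support_sets[OF m i] by (intro AE_not_in) (simp add: null_sets_def zero_less_iff_neq_zero)
  then have "AE t in M m. \<kappa> m i t = 0"
    using AE_space by eventually_elim (use kernel_nonneg[OF m i] in \<open>fastforce simp: kernel_support_def\<close>)
  then have "integral\<^sup>L (M m) (\<kappa> m i) = 0" by (rule integral_eq_zero_AE)
  then show False using kernel_integral[OF m i] by simp
qed

text \<open>Where the lower bound on the density enters: sets of positive measure in every
  coordinate are simultaneously charged by the kernels of a single observation.\<close>

lemma common_observation:
  assumes A: "\<And>m. m \<in> {1..d} \<Longrightarrow> A m \<in> sets (M m) \<and> 0 < emeasure (M m) (A m)"
  shows "\<exists>i\<in>I. \<forall>m\<in>{1..d}. 0 < emeasure (M m) (A m \<inter> kernel_support m i)"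
proof (rule ccontr)
  assume "\<not> ?thesis"
  then obtain mf where mf: "\<And>i. i \<in> I \<Longrightarrow> mf i \<in> {1..d} \<and> emeasure (M (mf i)) (A (mf i) \<inter> kernel_support (mf i) i) = 0"
    by (metis not_gr_zero)
  define A' where "A' m = A m - (\<Union>i\<in>{i\<in>I. mf i = m}. A m \<inter> kernel_support m i)" for m
  have ne: "A' m \<noteq> {}" if m: "m \<in> {1..d}" for m
  proof -
    have "(\<Union>i\<in>{i\<in>I. mf i = m}. A m \<inter> kernel_support m i) \<in> null_sets (M m)"
    proof (rule null_sets_UN')
      show "countable {i\<in>I. mf i = m}" using finite_I by (simp add: countable_finite)
      fix i assume i: "i \<in> {i\<in>I. mf i = m}"
      then have "A m \<inter> kernel_support m i \<in> sets (M m)" using A[OF m] kernel_support_sets[OF m] by auto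
      then show "A m \<inter> kernel_support m i \<in> null_sets (M m)" using mf i by (auto simp: null_sets_def)
    qed
    then have "emeasure (M m) (A' m) = emeasure (M m) (A m)" unfolding A'_def
      by (rule emeasure_Diff_null_set) (use A[OF m] in auto)
    then show ?thesis using A[OF m] by auto
  qed
  define x where "x m = (SOME t. t \<in> A' m)" for m
  have xA: "x m \<in> A' m" if "m \<in> {1..d}" for m unfolding x_def using ne[OF that] by (simp add: some_in_eq)
  have xs: "x m \<in> space (M m)" if m: "m \<in> {1..d}" for m
    using xA[OF m] A[OF m] sets.sets_into_space unfolding A'_def by blast
  obtain \<eta> where \<eta>: "0 < \<eta>"
    and cover: "\<And>x. (\<And>k. k \<in> {1..d} \<Longrightarrow> x k \<in> space (M k)) \<Longrightarrow> \<exists>i\<in>I. \<forall>k\<in>{1..d}. \<eta> \<le> \<kappa> k i (x k)"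
    using joint_cover by blast
  obtain i where i: "i \<in> I" "\<forall>m\<in>{1..d}. \<eta> \<le> \<kappa> m i (x m)" using cover[OF xs] by blast
  have m: "mf i \<in> {1..d}" using mf[OF i(1)] by blast
  have "x (mf i) \<in> kernel_support (mf i) i" using i(2) m xs[OF m] \<eta> unfolding kernel_support_def by fastforce
  moreover have "x (mf i) \<in> A (mf i)" "x (mf i) \<notin> A (mf i) \<inter> kernel_support (mf i) i"
    using xA[OF m] i(1) unfolding A'_def by blast+
  ultimately show False by blast
qed

lemma integrable_overlap:
  assumes "m \<in> {1..d}" "i \<in> I" "i' \<in> I"
  shows "integrable (M m) (\<lambda>t. min (\<kappa> m i t) (\<kappa> m i' t))"
proof (rule Bochner_Integration.integrable_bound[OF integrable_kernel[OF assms(1,2)]])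
  show "(\<lambda>t. min (\<kappa> m i t) (\<kappa> m i' t)) \<in> borel_measurable (M m)"
    using kernel_measurable[OF assms(1,2)] kernel_measurable[OF assms(1,3)] by measurable
  show "AE t in M m. norm (min (\<kappa> m i t) (\<kappa> m i' t)) \<le> norm (\<kappa> m i t)"
    using kernel_nonneg[OF assms(1,2)] kernel_nonneg[OF assms(1,3)] by (intro AE_I2) auto
qed

lemma overlap_pos:
  assumes m: "m \<in> {1..d}" and i: "i \<in> I" and i': "i' \<in> I"
    and pos: "0 < emeasure (M m) (kernel_support m i \<inter> kernel_support m i')"
  shows "0 < overlap m i i'"
proof -
  have nn: "AE t in M m. 0 \<le> min (\<kappa> m i t) (\<kappa> m i' t)"
    using kernel_nonneg[OF m i] kernel_nonneg[OF m i'] by (intro AE_I2) auto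
  have "overlap m i i' \<noteq> 0"
  proof
    assume "overlap m i i' = 0"
    then have "AE t in M m. min (\<kappa> m i t) (\<kappa> m i' t) = 0"
      unfolding overlap_def using integral_nonneg_eq_0_iff_AE[OF integrable_overlap[OF m i i'] nn] by simp
    then have "AE t in M m. t \<notin> kernel_support m i \<inter> kernel_support m i'"
      by eventually_elim (auto simp: kernel_support_def)
    then have "kernel_support m i \<inter> kernel_support m i' \<in> null_sets (M m)"
      using AE_iff_null_sets kernel_support_sets[OF m i] kernel_support_sets[OF m i'] by blast
    then show False using pos by auto
  qed
  moreover have "0 \<le> overlap m i i'" unfolding overlap_def by (rule integral_nonneg_AE[OF nn])
  ultimately show ?thesis by simp
qed

text \<open>Two observations whose kernels overlap see nearly the same local mean, up to their
  local variances; this is what ties the local means of a centred function to its energy.\<close>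

lemma overlap_mean_diff:
  fixes g :: "'x \<Rightarrow> 'h::{real_inner,banach,second_countable_topology}"
  assumes m: "m \<in> {1..d}" and i: "i \<in> I" and i': "i' \<in> I" and g: "square_integrable m g"
  shows "overlap m i i' * (norm (local_mean m i g - local_mean m i' g))\<^sup>2 \<le>
     2 * (local_inner m i g g - (norm (local_mean m i g))\<^sup>2) + 2 * (local_inner m i' g g - (norm (local_mean m i' g))\<^sup>2)"
proof -
  let ?c = "local_mean m i g" and ?c' = "local_mean m i' g"
  let ?w = "\<lambda>t. min (\<kappa> m i t) (\<kappa> m i' t)"
  have int: "integrable (M m) (\<lambda>t. \<kappa> m j t * (norm (g t - local_mean m j g))\<^sup>2)" if "j \<in> I" for j
    using integrable_kernel_inner[OF m that, of "\<lambda>t. g t - local_mean m j g" "\<lambda>t. g t - local_mean m j g"]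
      square_integrable_diff[OF g square_integrable_const[OF m]]
    by (simp add: power2_norm_eq_inner)
  have "overlap m i i' * (norm (?c - ?c'))\<^sup>2 = (\<integral>t. ?w t * (norm (?c - ?c'))\<^sup>2 \<partial>M m)"
    unfolding overlap_def by simp
  also have "\<dots> \<le> (\<integral>t. 2 * (\<kappa> m i t * (norm (g t - ?c))\<^sup>2) + 2 * (\<kappa> m i' t * (norm (g t - ?c'))\<^sup>2) \<partial>M m)"
  proof (rule integral_mono)
    show "integrable (M m) (\<lambda>t. ?w t * (norm (?c - ?c'))\<^sup>2)" using integrable_overlap[OF m i i'] by simp
    show "integrable (M m) (\<lambda>t. 2 * (\<kappa> m i t * (norm (g t - ?c))\<^sup>2) + 2 * (\<kappa> m i' t * (norm (g t - ?c'))\<^sup>2))"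
      using int[OF i] int[OF i'] by simp
    fix t assume t: "t \<in> space (M m)"
    have "norm (?c - ?c') \<le> norm (g t - ?c) + norm (g t - ?c')"
      using norm_triangle_ineq4[of "g t - ?c'" "g t - ?c"] by (simp add: norm_minus_commute)
    then have "(norm (?c - ?c'))\<^sup>2 \<le> 2 * (norm (g t - ?c))\<^sup>2 + 2 * (norm (g t - ?c'))\<^sup>2"
      using power_mono[of "norm (?c - ?c')" _ 2] power2_sum_le[of "norm (g t - ?c)" "norm (g t - ?c')"]
      by (meson norm_ge_zero order_trans)
    then have "?w t * (norm (?c - ?c'))\<^sup>2 \<le> ?w t * (2 * (norm (g t - ?c))\<^sup>2 + 2 * (norm (g t - ?c'))\<^sup>2)"
      using kernel_nonneg[OF m i t] kernel_nonneg[OF m i' t] by (intro mult_left_mono) auto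
    also have "\<dots> \<le> 2 * (\<kappa> m i t * (norm (g t - ?c))\<^sup>2) + 2 * (\<kappa> m i' t * (norm (g t - ?c'))\<^sup>2)"
      by (simp add: algebra_simps add_mono mult_right_mono)
    finally show "?w t * (norm (?c - ?c'))\<^sup>2 \<le> 2 * (\<kappa> m i t * (norm (g t - ?c))\<^sup>2) + 2 * (\<kappa> m i' t * (norm (g t - ?c'))\<^sup>2)" .
  qed
  also have "\<dots> = 2 * (local_inner m i g g - (norm ?c)\<^sup>2) + 2 * (local_inner m i' g g - (norm ?c')\<^sup>2)"
    using int[OF i] int[OF i'] local_variance_eq[OF m i g] local_variance_eq[OF m i' g] by simp
  finally show ?thesis .
qed

lemma overlap_chain:
  assumes k: "k \<in> {1..d}" and i: "i \<in> I" and i': "i' \<in> I"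
  shows "\<exists>i''\<in>I. 0 < overlap k i i'' \<and> (\<forall>m\<in>{1..d}. m \<noteq> k \<longrightarrow> 0 < overlap m i' i'')"
proof -
  define A where "A m = (if m = k then kernel_support k i else kernel_support m i')" for m
  have "\<And>m. m \<in> {1..d} \<Longrightarrow> A m \<in> sets (M m) \<and> 0 < emeasure (M m) (A m)"
    unfolding A_def using kernel_support_sets kernel_support_pos i i' by auto
  from common_observation[OF this] obtain i'' where
    i'': "i'' \<in> I" "\<forall>m\<in>{1..d}. 0 < emeasure (M m) (A m \<inter> kernel_support m i'')" by blast
  have "0 < emeasure (M k) (A k \<inter> kernel_support k i'')" using i''(2) k by blast
  then have "0 < overlap k i i''" by (intro overlap_pos[OF k i i''(1)]) (simp add: A_def)
  moreover have "\<forall>m\<in>{1..d}. m \<noteq> k \<longrightarrow> 0 < overlap m i' i''"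
    using i''(2) by (auto intro!: overlap_pos[OF _ i' i''(1)] simp: A_def)
  ultimately show ?thesis using i''(1) by blast
qed

definition min_overlap :: real where
  "min_overlap = Min (insert 1 {w \<in> (\<lambda>(m, i, i'). overlap m i i') ` ({1..d} \<times> I \<times> I). 0 < w})"

lemma min_overlap_pos: "0 < min_overlap"
  unfolding min_overlap_def using finite_I by (subst Min_gr_iff) auto

lemma min_overlap_le:
  assumes "m \<in> {1..d}" "i \<in> I" "i' \<in> I" "0 < overlap m i i'"
  shows "min_overlap \<le> overlap m i i'"
proof -
  have "overlap m i i' \<in> (\<lambda>(m, i, i'). overlap m i i') ` ({1..d} \<times> I \<times> I)"
    using assms by (intro image_eqI[of _ _ "(m, i, i')"]) auto
  then show ?thesis unfolding min_overlap_def using finite_I assms by (intro Min_le) auto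
qed

lemma overlapping_means_close:
  fixes G :: "nat \<Rightarrow> 'x \<Rightarrow> 'h::{real_inner,banach,second_countable_topology}"
  assumes G: "\<And>k. k \<in> {1..d} \<Longrightarrow> square_integrable k (G k)"
    and m: "m \<in> {1..d}" and i: "i \<in> I" and i': "i' \<in> I" and W: "0 < overlap m i i'"
  shows "norm (local_mean m i (G m) - local_mean m i' (G m)) \<le> 2 * sqrt (1 / (a * min_overlap)) * sqrt (energy G)"
proof -
  let ?\<Delta> = "norm (local_mean m i (G m) - local_mean m i' (G m))"
  have var: "local_inner m j (G m) (G m) - (norm (local_mean m j (G m)))\<^sup>2 \<le> energy G / a" if "j \<in> I" for j
    using local_variance_le_energy[OF G m that] a_pos by (simp add: field_simps mult.commute)
  have "min_overlap * ?\<Delta>\<^sup>2 \<le> overlap m i i' * ?\<Delta>\<^sup>2"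
    by (rule mult_right_mono[OF min_overlap_le[OF m i i' W]]) simp
  also have "\<dots> \<le> 2 * (local_inner m i (G m) (G m) - (norm (local_mean m i (G m)))\<^sup>2)
      + 2 * (local_inner m i' (G m) (G m) - (norm (local_mean m i' (G m)))\<^sup>2)"
    by (rule overlap_mean_diff[OF m i i' G[OF m]])
  also have "\<dots> \<le> 2 * (energy G / a) + 2 * (energy G / a)" by (intro add_mono mult_left_mono var i i') simp_all
  finally have "?\<Delta>\<^sup>2 \<le> 4 * (1 / (a * min_overlap)) * energy G"
    using min_overlap_pos a_pos by (simp add: field_simps)
  then have "?\<Delta> \<le> sqrt (4 * (1 / (a * min_overlap)) * energy G)" by (rule real_le_rsqrt)
  then show ?thesis by (simp only: real_sqrt_mult real_sqrt_four)
qed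

lemma norm_sum_local_mean_le:
  fixes G :: "nat \<Rightarrow> 'x \<Rightarrow> 'h::{real_inner,banach,second_countable_topology}"
  assumes G: "\<And>k. k \<in> {1..d} \<Longrightarrow> square_integrable k (G k)" and i: "i \<in> I"
  shows "norm (\<Sum>k\<in>{1..d}. local_mean k i (G k)) \<le> sqrt (1 / a) * sqrt (energy G)"
proof -
  have "(norm (\<Sum>k\<in>{1..d}. local_mean k i (G k)))\<^sup>2 \<le> (1 / a) * energy G"
    using norm_sum_local_mean_le_energy[OF G i] a_pos by (simp add: field_simps)
  then show ?thesis by (simp add: real_le_rsqrt flip: real_sqrt_mult)
qed

text \<open>Local means of the same component for arbitrary observations \<open>i, i'\<close> are compared
  through an observation \<open>i''\<close> overlapping \<open>i\<close> in coordinate \<open>k\<close> and \<open>i'\<close> in all other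
  coordinates, using that the sums over all components are small.\<close>

lemma local_means_close:
  fixes G :: "nat \<Rightarrow> 'x \<Rightarrow> 'h::{real_inner,banach,second_countable_topology}"
  assumes G: "\<And>k. k \<in> {1..d} \<Longrightarrow> square_integrable k (G k)"
    and k: "k \<in> {1..d}" and i: "i \<in> I" and i': "i' \<in> I"
  shows "norm (local_mean k i (G k) - local_mean k i' (G k))
           \<le> ((1 + real d) * 2 * sqrt (1 / (a * min_overlap)) + 2 * sqrt (1 / a)) * sqrt (energy G)"
proof -
  let ?c = "\<lambda>m j. local_mean m j (G m)"
  let ?s = "\<lambda>j. \<Sum>m\<in>{1..d}. ?c m j"
  define \<delta> where "\<delta> = 2 * sqrt (1 / (a * min_overlap)) * sqrt (energy G)"
  define \<sigma> where "\<sigma> = sqrt (1 / a) * sqrt (energy G)"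
  have \<delta>: "0 \<le> \<delta>" unfolding \<delta>_def using a_pos min_overlap_pos energy_nonneg[OF G] by simp
  obtain i'' where i'': "i'' \<in> I" "0 < overlap k i i''" "\<forall>m\<in>{1..d}. m \<noteq> k \<longrightarrow> 0 < overlap m i' i''"
    using overlap_chain[OF k i i'] by blast
  have close: "norm (?c m j - ?c m j') \<le> \<delta>" if "m \<in> {1..d}" "j \<in> I" "j' \<in> I" "0 < overlap m j j'" for m j j'
    unfolding \<delta>_def by (rule overlapping_means_close[OF G that])
  have split: "?s j = ?c k j + (\<Sum>m\<in>{1..d}-{k}. ?c m j)" for j
    using k by (simp add: sum.remove)
  have eq: "?c k i - ?c k i' = (?c k i - ?c k i'') + (?s i'' - ?s i') + (\<Sum>m\<in>{1..d}-{k}. ?c m i' - ?c m i'')"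
    unfolding split[of i''] split[of i'] by (simp add: sum_subtractf algebra_simps)
  have "norm (?c k i - ?c k i') \<le> norm (?c k i - ?c k i'') + norm (?s i'' - ?s i')
      + norm (\<Sum>m\<in>{1..d}-{k}. ?c m i' - ?c m i'')"
    unfolding eq by (meson norm_triangle_ineq order_trans add_mono order_refl)
  also have "\<dots> \<le> \<delta> + 2 * \<sigma> + real d * \<delta>"
  proof (intro add_mono)
    show "norm (?c k i - ?c k i'') \<le> \<delta>" by (rule close[OF k i i''(1,2)])
    show "norm (?s i'' - ?s i') \<le> 2 * \<sigma>"
      using norm_triangle_ineq4[of "?s i''" "?s i'"] norm_sum_local_mean_le[OF G i''(1)]
        norm_sum_local_mean_le[OF G i'] unfolding \<sigma>_def by linarith
    have "norm (\<Sum>m\<in>{1..d}-{k}. ?c m i' - ?c m i'') \<le> (\<Sum>m\<in>{1..d}-{k}. norm (?c m i' - ?c m i''))"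
      by (rule norm_sum)
    also have "\<dots> \<le> real (card ({1..d}-{k})) * \<delta>"
      using close i' i'' by (intro sum_bounded_above) auto
    also have "\<dots> \<le> real d * \<delta>" using card_Diff1_le[of "{1..d}" k] \<delta> by (intro mult_right_mono) auto
    finally show "norm (\<Sum>m\<in>{1..d}-{k}. ?c m i' - ?c m i'') \<le> real d * \<delta>" .
  qed
  finally show ?thesis unfolding \<delta>_def \<sigma>_def by (simp add: algebra_simps)
qed

lemma local_mean_coercive:
  obtains K0 where "0 \<le> K0"
    and "\<And>(G :: nat \<Rightarrow> 'x \<Rightarrow> 'h::{real_inner,banach,second_countable_topology}) k i.
           admissible G \<Longrightarrow> k \<in> {1..d} \<Longrightarrow> i \<in> I \<Longrightarrow> norm (local_mean k i (G k)) \<le> K0 * sqrt (energy G)"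
proof
  define K0 where "K0 = (1 + real d) * 2 * sqrt (1 / (a * min_overlap)) + 2 * sqrt (1 / a)"
  show "0 \<le> K0" unfolding K0_def using a_pos min_overlap_pos by simp
  fix G :: "nat \<Rightarrow> 'x \<Rightarrow> 'h" and k i
  assume G: "admissible G" and k: "k \<in> {1..d}" and i: "i \<in> I"
  have sqG: "\<And>k. k \<in> {1..d} \<Longrightarrow> square_integrable k (G k)" using G by (rule admissible_square_integrable)
  have "(\<Sum>i'\<in>I. local_mean k i' (G k)) = 0" using G k by (simp add: admissible_def centered_def)
  then have "real (card I) *\<^sub>R local_mean k i (G k) = (\<Sum>i'\<in>I. local_mean k i (G k) - local_mean k i' (G k))"
    by (simp add: sum_subtractf scaleR_conv_of_real sum_constant_scaleR)
  then have "real (card I) * norm (local_mean k i (G k)) \<le> (\<Sum>i'\<in>I. norm (local_mean k i (G k) - local_mean k i' (G k)))"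
    by (metis norm_scaleR abs_of_nat norm_sum)
  also have "\<dots> \<le> real (card I) * (K0 * sqrt (energy G))"
    unfolding K0_def using local_means_close[OF sqG k i] by (intro sum_bounded_above) auto
  finally show "norm (local_mean k i (G k)) \<le> K0 * sqrt (energy G)" using card_I_pos by simp
qed

section \<open>Geometric convergence of the sweeps\<close>

lemma marginal_norm2_le_energy:
  fixes G :: "nat \<Rightarrow> 'x \<Rightarrow> 'h::{real_inner,banach,second_countable_topology}"
  assumes coercive: "\<And>k i. k \<in> {1..d} \<Longrightarrow> i \<in> I \<Longrightarrow> norm (local_mean k i (G k)) \<le> K0 * sqrt (energy G)"
    and G: "\<And>k. k \<in> {1..d} \<Longrightarrow> square_integrable k (G k)" and j: "j \<in> {1..d}"
  shows "marginal_norm2 j (G j) \<le> real (card I) * (1 + a * K0\<^sup>2) * energy G"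
proof -
  have E: "0 \<le> energy G" by (rule energy_nonneg[OF G])
  have "marginal_norm2 j (G j) = (\<Sum>i\<in>I. a * (local_inner j i (G j) (G j) - (norm (local_mean j i (G j)))\<^sup>2)
      + a * (norm (local_mean j i (G j)))\<^sup>2)"
    unfolding marginal_norm2_def by (simp add: algebra_simps)
  also have "\<dots> \<le> real (card I) * (energy G + a * (K0\<^sup>2 * energy G))"
  proof (rule sum_bounded_above, rule add_mono)
    fix i assume i: "i \<in> I"
    show "a * (local_inner j i (G j) (G j) - (norm (local_mean j i (G j)))\<^sup>2) \<le> energy G"
      by (rule local_variance_le_energy[OF G j i])
    have "(norm (local_mean j i (G j)))\<^sup>2 \<le> (K0 * sqrt (energy G))\<^sup>2"
      using coercive[OF j i] by (intro power_mono) auto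
    then show "a * (norm (local_mean j i (G j)))\<^sup>2 \<le> a * (K0\<^sup>2 * energy G)"
      using E a_pos by (simp add: power_mult_distrib)
  qed
  finally show ?thesis by (simp add: algebra_simps)
qed

lemma norm_sweep_le_energy:
  fixes G G' :: "nat \<Rightarrow> 'x \<Rightarrow> 'h::{real_inner,banach,second_countable_topology}"
  assumes K0: "0 \<le> K0"
    and coercive: "\<And>(H :: nat \<Rightarrow> 'x \<Rightarrow> 'h) k i. admissible H \<Longrightarrow> k \<in> {1..d} \<Longrightarrow> i \<in> I \<Longrightarrow>
                      norm (local_mean k i (H k)) \<le> K0 * sqrt (energy H)"
    and sw: "sweep G G'" and G: "admissible G" and j: "j \<in> {1..d}" and t: "t \<in> space (M j)"
  shows "norm (G' j t) \<le> 2 * real (card I) * real d * K0 * sqrt (energy G)"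
proof -
  have G': "admissible G'" by (rule sweep_admissible[OF sw G])
  have "K0 * sqrt (energy G') \<le> K0 * sqrt (energy G)"
    using energy_sweep_le[OF sw admissible_square_integrable[OF G]] K0
    by (intro mult_left_mono real_sqrt_le_mono)
  then have means: "norm (local_mean k i (H k)) \<le> K0 * sqrt (energy G)"
    if "H = G \<or> H = G'" "k \<in> {1..d}" "i \<in> I" for H k i
    using that coercive[OF G] coercive[OF G'] by fastforce
  define v where "v i = - ((\<Sum>k\<in>{1..<j}. local_mean k i (G' k)) + (\<Sum>k\<in>{j<..d}. local_mean k i (G k)))" for i
  have "norm (G' j t) \<le> (\<Sum>i\<in>I. norm (v i))"
    using sw j t norm_blend_le[OF j t, of v] unfolding sweep_def v_def by simp
  also have "\<dots> \<le> real (card I) * (2 * real d * (K0 * sqrt (energy G)))"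
  proof (rule sum_bounded_above)
    fix i assume i: "i \<in> I"
    have "norm (v i) \<le> (\<Sum>k\<in>{1..<j}. norm (local_mean k i (G' k))) + (\<Sum>k\<in>{j<..d}. norm (local_mean k i (G k)))"
      unfolding v_def norm_minus_cancel by (intro order_trans[OF norm_triangle_ineq] add_mono norm_sum)
    also have "\<dots> \<le> real (card {1..<j}) * (K0 * sqrt (energy G)) + real (card {j<..d}) * (K0 * sqrt (energy G))"
      using means i j by (intro add_mono sum_bounded_above) auto
    also have "\<dots> \<le> real d * (K0 * sqrt (energy G)) + real d * (K0 * sqrt (energy G))"
      using K0 j energy_nonneg[OF admissible_square_integrable[OF G]] by (intro add_mono mult_right_mono) auto
    finally show "norm (v i) \<le> 2 * real d * (K0 * sqrt (energy G))" by (simp add: mult_ac)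
  qed
  finally show ?thesis by (simp add: algebra_simps)
qed

lemma admissible_sweeps:
  fixes G :: "nat \<Rightarrow> nat \<Rightarrow> 'x \<Rightarrow> 'h::{real_inner,banach,second_countable_topology}"
  assumes "admissible (G 0)" and "\<And>r. sweep (G r) (G (Suc r))"
  shows "admissible (G r)"
  by (induction r) (use assms sweep_admissible in auto)

lemma energy_geometric_decay:
  fixes G :: "nat \<Rightarrow> nat \<Rightarrow> 'x \<Rightarrow> 'h::{real_inner,banach,second_countable_topology}"
  assumes K0: "0 \<le> K0"
    and coercive: "\<And>(H :: nat \<Rightarrow> 'x \<Rightarrow> 'h) k i. admissible H \<Longrightarrow> k \<in> {1..d} \<Longrightarrow> i \<in> I \<Longrightarrow>
                      norm (local_mean k i (H k)) \<le> K0 * sqrt (energy H)"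
    and G0: "admissible (G 0)" and sw: "\<And>r. sweep (G r) (G (Suc r))"
  obtains \<rho> where "0 < \<rho>" "\<rho> < 1"
    and "\<And>r. energy (G r) \<le> energy (G 0) * \<rho> ^ r"
    and "\<And>r. sqrt (energy (G r)) \<le> sqrt (energy (G 0)) * \<rho> ^ r"
proof
  define C1 where "C1 = real (card I) * real d ^ 2 * K0 * sqrt a"
  define q where "q = max (C1\<^sup>2 / (1 + C1\<^sup>2)) (1 / 2)"
  have q: "0 < q" "q < 1" unfolding q_def by (auto simp: add_pos_nonneg)
  show \<rho>: "0 < sqrt q" "sqrt q < 1" using q by auto
  have adm: "\<And>r. admissible (G r)" by (rule admissible_sweeps[OF G0 sw])
  have E: "\<And>r. 0 \<le> energy (G r)" using adm by (intro energy_nonneg admissible_square_integrable)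
  have decay: "energy (G r) \<le> energy (G 0) * q ^ r" for r
  proof (induction r)
    case (Suc r)
    have "energy (G (Suc r)) \<le> C1\<^sup>2 / (1 + C1\<^sup>2) * energy (G r)"
      unfolding C1_def by (rule energy_sweep_contract[OF K0 coercive sw adm])
    also have "\<dots> \<le> q * (energy (G 0) * q ^ r)"
      using E[of r] Suc q by (intro mult_mono) (auto simp: q_def)
    finally show ?case by (simp add: mult_ac)
  qed simp
  show "sqrt (energy (G r)) \<le> sqrt (energy (G 0)) * sqrt q ^ r" for r
    using real_sqrt_le_mono[OF decay[of r]] by (simp add: real_sqrt_mult real_sqrt_power)
  have "q \<le> sqrt q" using \<rho> real_sqrt_mult_self[of q] q by (metis abs_of_pos mult_left_le_one_le less_imp_le)
  then show "energy (G r) \<le> energy (G 0) * sqrt q ^ r" for r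
    using decay[of r] E[of 0] q by (meson mult_left_mono order_trans power_mono less_imp_le)
qed

theorem sweep_geometric_convergence:
  fixes G :: "nat \<Rightarrow> nat \<Rightarrow> 'x \<Rightarrow> 'h::{real_inner,banach,second_countable_topology}"
  assumes G0: "admissible (G 0)" and sw: "\<And>r. sweep (G r) (G (Suc r))"
  obtains C \<rho> where "0 < C" "0 < \<rho>" "\<rho> < 1"
    and "\<And>r j. j \<in> {1..d} \<Longrightarrow> marginal_norm2 j (G r j) \<le> C * \<rho> ^ r"
    and "\<And>r j t. j \<in> {1..d} \<Longrightarrow> t \<in> space (M j) \<Longrightarrow> norm (G (Suc r) j t) \<le> C * \<rho> ^ r"
proof -
  obtain K0 where K0: "0 \<le> K0"
    and coercive: "\<And>(H :: nat \<Rightarrow> 'x \<Rightarrow> 'h) k i. admissible H \<Longrightarrow> k \<in> {1..d} \<Longrightarrow> i \<in> I \<Longrightarrow>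
                      norm (local_mean k i (H k)) \<le> K0 * sqrt (energy H)"
    using local_mean_coercive by blast
  obtain \<rho> where \<rho>: "0 < \<rho>" "\<rho> < 1" and decay: "\<And>r. energy (G r) \<le> energy (G 0) * \<rho> ^ r"
    and sqrt_decay: "\<And>r. sqrt (energy (G r)) \<le> sqrt (energy (G 0)) * \<rho> ^ r"
    using energy_geometric_decay[OF K0 coercive G0 sw] by blast
  have adm: "\<And>r. admissible (G r)" by (rule admissible_sweeps[OF G0 sw])
  define E0 where "E0 = energy (G 0)"
  define c2 where "c2 = real (card I) * (1 + a * K0\<^sup>2)"
  define c3 where "c3 = 2 * real (card I) * real d * K0"
  define C where "C = c2 * E0 + c3 * sqrt E0 + 1"
  have E0: "0 \<le> E0" unfolding E0_def using adm by (intro energy_nonneg admissible_square_integrable)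
  have c2: "0 \<le> c2" unfolding c2_def using a_pos by simp
  have c3: "0 \<le> c3" unfolding c3_def using K0 by simp
  have C: "0 < C" "c2 * E0 \<le> C" "c3 * sqrt E0 \<le> C"
    unfolding C_def using mult_nonneg_nonneg[OF c2 E0] mult_nonneg_nonneg[OF c3 real_sqrt_ge_zero[OF E0]]
    by linarith+
  show thesis
  proof
    show "0 < C" "0 < \<rho>" "\<rho> < 1" by (fact C(1) \<rho>)+
    fix r j assume j: "j \<in> {1..d}"
    have "marginal_norm2 j (G r j) \<le> c2 * energy (G r)"
      unfolding c2_def by (rule marginal_norm2_le_energy[OF coercive[OF adm] admissible_square_integrable[OF adm] j])
    also have "\<dots> \<le> c2 * E0 * \<rho> ^ r" using decay[of r] c2 unfolding E0_def by (simp add: mult_left_mono mult.assoc)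
    also have "\<dots> \<le> C * \<rho> ^ r" using C \<rho> by (intro mult_right_mono) auto
    finally show "marginal_norm2 j (G r j) \<le> C * \<rho> ^ r" .
    fix t assume t: "t \<in> space (M j)"
    have "norm (G (Suc r) j t) \<le> c3 * sqrt (energy (G r))"
      unfolding c3_def by (rule norm_sweep_le_energy[OF K0 coercive sw adm j t])
    also have "\<dots> \<le> c3 * sqrt E0 * \<rho> ^ r" using sqrt_decay[of r] c3 unfolding E0_def by (simp add: mult_left_mono mult.assoc)
    also have "\<dots> \<le> C * \<rho> ^ r" using C \<rho> by (intro mult_right_mono) auto
    finally show "norm (G (Suc r) j t) \<le> C * \<rho> ^ r" .
  qed
qed

end

section \<open>Lebesgue measure on the coordinate spaces and the boundary-corrected kernels\<close>

lemma space_lebL: "space (lebL L j) = PiE {..<L j} (\<lambda>_. UNIV)"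
  unfolding lebL_def by (simp add: space_PiM)

lemma borel_measurable_component_lebL: "i < L j \<Longrightarrow> (\<lambda>x. x i) \<in> borel_measurable (lebL L j)"
  unfolding lebL_def by (drule measurable_component_singleton[where M="\<lambda>_. lborel", OF lessThan_iff[THEN iffD2]]) simp

lemma borel_measurable_id_lebL: "(\<lambda>x. x) \<in> borel_measurable (lebL L j)"
proof (rule measurable_coordinatewise_then_product)
  fix i
  show "(\<lambda>x. x i) \<in> borel_measurable (lebL L j)"
  proof (cases "i < L j")
    case True
    then show ?thesis by (rule borel_measurable_component_lebL)
  next
    case False
    then have "\<And>x. x \<in> space (lebL L j) \<Longrightarrow> x i = undefined"
      unfolding space_lebL by (auto simp: PiE_def extensional_def)
    then show ?thesis by (metis (no_types, lifting) measurable_cong borel_measurable_const)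
  qed
qed

lemma compact_in_sets_lebL:
  assumes "compact D" "D \<subseteq> PiE {..<L j} (\<lambda>_. UNIV)"
  shows "D \<in> sets (lebL L j)"
proof -
  have "(\<lambda>x. x) -` D \<inter> space (lebL L j) \<in> sets (lebL L j)"
    using assms(1) by (intro measurable_sets[OF borel_measurable_id_lebL]) (simp add: compact_imp_closed)
  then show ?thesis using assms(2) unfolding space_lebL by (simp add: Int_absorb2)
qed

lemma emeasure_compact_lebL_finite:
  assumes "compact D" "D \<subseteq> PiE {..<L j} (\<lambda>_. UNIV)"
  shows "emeasure (lebL L j) D < \<infinity>"
proof -
  have "compact (\<Union>l\<in>{..<L j}. (\<lambda>x. x l) ` D)"
    by (intro compact_UN finite_lessThan compact_continuous_image
        continuous_on_subset[OF continuous_on_product_coordinates] assms(1)) auto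
  then obtain R where R: "\<And>y. y \<in> (\<Union>l\<in>{..<L j}. (\<lambda>x. x l) ` D) \<Longrightarrow> norm y \<le> R"
    using compact_imp_bounded bounded_iff by metis
  have sub: "D \<subseteq> PiE {..<L j} (\<lambda>_. {-R..R})"
  proof
    fix x assume x: "x \<in> D"
    have "x l \<in> {-R..R}" if "l < L j" for l
    proof -
      have "\<bar>x l\<bar> \<le> R" using R x that by fastforce
      then show ?thesis by (simp add: abs_le_iff)
    qed
    then show "x \<in> PiE {..<L j} (\<lambda>_. {-R..R})" using x assms(2) by (auto simp: PiE_iff)
  qed
  interpret product_sigma_finite "\<lambda>_::nat. lborel" by standard
  have "emeasure (lebL L j) D \<le> emeasure (lebL L j) (PiE {..<L j} (\<lambda>_. {-R..R}))"
    by (rule emeasure_mono[OF sub]) (unfold lebL_def, auto intro!: sets_PiM_I_finite)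
  also have "\<dots> = (\<Prod>l\<in>{..<L j}. emeasure lborel {-R..R})" unfolding lebL_def by (rule emeasure_PiM) auto
  also have "\<dots> < \<infinity>" by (simp add: power_less_top_ennreal emeasure_lborel_Icc_eq)
  finally show ?thesis .
qed

lemma distL_nonneg: "0 \<le> distL L j t u"
  unfolding distL_def by (simp add: sum_nonneg)

lemma borel_measurable_distL: "(\<lambda>t. distL L j t u) \<in> borel_measurable (lebL L j)"
proof -
  have "(\<lambda>t. (t i - u i)\<^sup>2) \<in> borel_measurable (lebL L j)" if "i \<in> {..<L j}" for i
  proof -
    have [measurable]: "(\<lambda>t. t i) \<in> borel_measurable (lebL L j)"
      using that by (simp add: borel_measurable_component_lebL)
    show ?thesis by measurable
  qed
  then have [measurable]: "(\<lambda>t. \<Sum>i<L j. (t i - u i)\<^sup>2) \<in> borel_measurable (lebL L j)"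
    by (rule borel_measurable_sum)
  show ?thesis unfolding distL_def by measurable
qed

lemma borel_measurable_sbf_Kh:
  assumes h: "h j > 0" and K: "continuous_on {0..} (K j)"
  shows "(\<lambda>t. sbf_Kh L D h K j t u) \<in> borel_measurable (lebL L j)"
proof -
  \<comment> \<open>\<open>K j\<close> is only continuous on \<open>[0,\<infinity>)\<close>, which contains all the arguments \<open>distL/h\<close>.\<close>
  have "continuous_on UNIV (\<lambda>s::real. K j (max 0 s))"
    by (rule continuous_on_compose2[OF K]) (auto intro!: continuous_intros)
  then have [measurable]: "(\<lambda>s. K j (max 0 s)) \<in> borel_measurable borel"
    by (rule borel_measurable_continuous_onI)
  have [measurable]: "(\<lambda>t. distL L j t u) \<in> borel_measurable (lebL L j)" by (rule borel_measurable_distL)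
  have "K j (distL L j t u / h j) = K j (max 0 (distL L j t u / h j))" for t
    using distL_nonneg[of L j t u] h by (simp add: max_def)
  then have "(\<lambda>t. K j (distL L j t u / h j) / h j ^ L j) \<in> borel_measurable (lebL L j)"
    by (simp only:) measurable
  then show ?thesis unfolding sbf_Kh_def Let_def by simp
qed

lemma sbf_Kh_normalizer_nonneg:
  assumes h: "h j > 0" and K_nonneg: "\<forall>s\<ge>0. 0 \<le> K j s"
  shows "0 \<le> (LINT t:D j|lebL L j. K j (distL L j t u / h j) / h j ^ L j)"
  unfolding set_lebesgue_integral_def
  by (rule Bochner_Integration.integral_nonneg) (use h K_nonneg distL_nonneg in \<open>auto simp: indicator_def\<close>)

lemma sbf_Kh_nonneg:
  assumes h: "h j > 0" and K_nonneg: "\<forall>s\<ge>0. 0 \<le> K j s"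
  shows "0 \<le> sbf_Kh L D h K j t u"
proof -
  define den where "den = (LINT t:D j|lebL L j. K j (distL L j t u / h j) / h j ^ L j)"
  have "0 \<le> den" unfolding den_def by (rule sbf_Kh_normalizer_nonneg[where h=h and j=j and K=K, OF h K_nonneg])
  then have "0 \<le> K j (distL L j t u / h j) / h j ^ L j / den"
    using K_nonneg distL_nonneg[of L j t u] h by (intro divide_nonneg_nonneg) auto
  then show ?thesis unfolding sbf_Kh_def Let_def den_def[symmetric] by simp
qed

lemma continuous_vanishing_bounded_above:
  fixes f :: "real \<Rightarrow> real"
  assumes f: "continuous_on {0..} f" and vanish: "\<forall>s\<ge>1. f s = 0"
  obtains B where "\<And>s. 0 \<le> s \<Longrightarrow> f s \<le> B"
proof -
  have "compact (f ` {0..1})" by (rule compact_continuous_image[OF continuous_on_subset[OF f]]) auto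
  then obtain B where B: "\<And>y. y \<in> f ` {0..1} \<Longrightarrow> norm y \<le> B" using compact_imp_bounded bounded_iff by metis
  have "f s \<le> max B 0" if "0 \<le> s" for s
    using B[of "f s"] vanish that by (cases "s \<le> 1") auto
  then show thesis using that by blast
qed

lemma sbf_Kh_bounded:
  assumes h: "h j > 0" and K: "continuous_on {0..} (K j)" and K_nonneg: "\<forall>s\<ge>0. 0 \<le> K j s"
    and K_zero: "\<forall>s\<ge>1. K j s = 0"
  shows "\<exists>B. \<forall>t. sbf_Kh L D h K j t u \<le> B"
proof -
  obtain B where B: "\<And>s. 0 \<le> s \<Longrightarrow> K j s \<le> B" using continuous_vanishing_bounded_above[OF K K_zero] by blast
  define den where "den = (LINT t:D j|lebL L j. K j (distL L j t u / h j) / h j ^ L j)"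
  have "sbf_Kh L D h K j t u \<le> max (1 / measure (lebL L j) (D j)) (B / h j ^ L j / den)" for t
  proof (cases "den = 0")
    case False
    have den: "0 \<le> den" unfolding den_def by (rule sbf_Kh_normalizer_nonneg[where h=h and j=j and K=K, OF h K_nonneg])
    have "K j (distL L j t u / h j) / h j ^ L j \<le> B / h j ^ L j"
      using B[of "distL L j t u / h j"] distL_nonneg[of L j t u] h by (simp add: divide_right_mono)
    then have "K j (distL L j t u / h j) / h j ^ L j / den \<le> B / h j ^ L j / den"
      using den by (rule divide_right_mono)
    then show ?thesis using False unfolding sbf_Kh_def Let_def den_def[symmetric] by simp
  qed (simp add: sbf_Kh_def Let_def den_def)
  then show ?thesis by blast
qed

lemma integral_sbf_Kh:
  assumes D_sets: "D j \<in> sets (lebL L j)" and D_pos: "0 < emeasure (lebL L j) (D j)"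
    and D_finite: "emeasure (lebL L j) (D j) < \<infinity>"
  shows "integral\<^sup>L (restrict_space (lebL L j) (D j)) (\<lambda>t. sbf_Kh L D h K j t u) = 1"
proof -
  define g where "g t = K j (distL L j t u / h j) / h j ^ L j" for t
  define den where "den = (LINT t:D j|lebL L j. g t)"
  have restrict: "integral\<^sup>L (restrict_space (lebL L j) (D j)) f = (LINT t:D j|lebL L j. f t)" for f :: "_ \<Rightarrow> real"
    unfolding set_lebesgue_integral_def using D_sets by (intro integral_restrict_space) simp
  have Kh: "sbf_Kh L D h K j t u = (if den = 0 then 1 / measure (lebL L j) (D j) else g t / den)" for t
    unfolding sbf_Kh_def Let_def g_def den_def ..
  show ?thesis
  proof (cases "den = 0")
    case True
    have "emeasure (lebL L j) (D j) \<noteq> 0" "emeasure (lebL L j) (D j) \<noteq> top" using D_pos D_finite by auto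
    then have "measure (lebL L j) (D j) \<noteq> 0" by (simp add: measure_def enn2real_eq_0_iff)
    moreover have "(LINT t:D j|lebL L j. 1 / measure (lebL L j) (D j))
        = measure (lebL L j) (D j) *\<^sub>R (1 / measure (lebL L j) (D j))"
      using D_finite by (intro set_integral_const[OF D_sets]) auto
    ultimately show ?thesis unfolding restrict Kh using True by simp
  next
    case False
    have "(LINT t:D j|lebL L j. g t / den) = den / den"
      unfolding set_lebesgue_integral_def den_def by simp
    then show ?thesis unfolding restrict Kh using False by simp
  qed
qed

section \<open>The smooth backfitting estimator\<close>

locale sbf_estimator =
  fixes L :: "nat \<Rightarrow> nat" and D :: "nat \<Rightarrow> (nat \<Rightarrow> real) set" and d n :: nat
    and \<xi> :: "nat \<Rightarrow> nat \<Rightarrow> nat \<Rightarrow> real" and h :: "nat \<Rightarrow> real" and K :: "nat \<Rightarrow> real \<Rightarrow> real"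
  assumes D_sub: "\<forall>j\<in>{1..d}. D j \<subseteq> {..<L j} \<rightarrow>\<^sub>E UNIV"
    and D_compact: "\<forall>j\<in>{1..d}. compact (D j)"
    and h_pos: "\<forall>j\<in>{1..d}. h j > 0"
    and K_cont: "\<forall>j\<in>{1..d}. continuous_on {0..} (K j)"
    and K_nonneg: "\<forall>j\<in>{1..d}. \<forall>t\<ge>0. K j t \<ge> 0"
    and K_zero: "\<forall>j\<in>{1..d}. \<forall>t\<ge>1. K j t = 0"
    and p0_pos: "sbf_p0 d n D \<xi> > 0"
    and p_bounded: "\<exists>c C. 0 < c \<and> (\<forall>x. (\<forall>j\<in>{1..d}. x j \<in> D j) \<longrightarrow>
                        c \<le> sbf_p L D h K d n \<xi> x \<and> sbf_p L D h K d n \<xi> x \<le> C)"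
begin

definition obs :: "nat set" where
  "obs = {i. i < n \<and> sbf_inD d D \<xi> i}"

definition mass :: real where
  "mass = inverse (sbf_p0 d n D \<xi> * real n)"

definition dom_measure :: "nat \<Rightarrow> (nat \<Rightarrow> real) measure" where
  "dom_measure k = restrict_space (lebL L k) (D k)"

definition kern :: "nat \<Rightarrow> nat \<Rightarrow> (nat \<Rightarrow> real) \<Rightarrow> real" where
  "kern k i t = sbf_Kh L D h K k t (\<xi> i k)"

lemma sum_over_obs: "(\<Sum>i<n. F i * of_bool (sbf_inD d D \<xi> i)) = (\<Sum>i\<in>obs. (F i :: real))"
proof -
  have "(\<Sum>i<n. F i * of_bool (sbf_inD d D \<xi> i)) = (\<Sum>i\<in>{..<n}. if sbf_inD d D \<xi> i then F i else 0)"
    by (intro sum.cong) auto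
  also have "\<dots> = (\<Sum>i\<in>{i\<in>{..<n}. sbf_inD d D \<xi> i}. F i)"
    by (rule sum.inter_filter[symmetric]) (rule finite_lessThan)
  also have "{i\<in>{..<n}. sbf_inD d D \<xi> i} = obs" unfolding obs_def by auto
  finally show ?thesis .
qed

lemma finite_obs: "finite obs"
  unfolding obs_def by simp

lemma n_pos: "0 < n"
proof (rule ccontr)
  assume "\<not> 0 < n"
  then have "sbf_p0 d n D \<xi> = 0" by (simp add: sbf_p0_def)
  with p0_pos show False by simp
qed

lemma p0_times_n: "sbf_p0 d n D \<xi> * real n = real (card obs)"
  using sum_over_obs[of "\<lambda>_. 1"] n_pos by (simp add: sbf_p0_def)

lemma obs_nonempty: "obs \<noteq> {}"
proof -
  have "0 < real (card obs)" unfolding p0_times_n[symmetric] using p0_pos n_pos by simp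
  then show ?thesis by auto
qed

lemma mass_pos: "0 < mass"
  unfolding mass_def p0_times_n using finite_obs obs_nonempty by (simp add: card_gt_0_iff)

lemma sbf_p_eq: "sbf_p L D h K d n \<xi> x = mass * (\<Sum>i\<in>obs. \<Prod>j\<in>{1..d}. kern j i (x j))"
  unfolding sbf_p_def sum_over_obs mass_def kern_def ..

lemma sbf_p1_eq: "sbf_p1 L D h K d n \<xi> j t = mass * (\<Sum>i\<in>obs. kern j i t)"
  unfolding sbf_p1_def sum_over_obs mass_def kern_def ..

lemma sbf_p2_eq: "sbf_p2 L D h K d n \<xi> j k x t = mass * (\<Sum>i\<in>obs. kern j i x * kern k i t)"
  unfolding sbf_p2_def sum_over_obs mass_def kern_def ..

lemma D_sets: "j \<in> {1..d} \<Longrightarrow> D j \<in> sets (lebL L j)"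
  using compact_in_sets_lebL D_compact D_sub by blast

lemma D_finite: "j \<in> {1..d} \<Longrightarrow> emeasure (lebL L j) (D j) < \<infinity>"
  using emeasure_compact_lebL_finite D_compact D_sub by blast

text \<open>If some \<open>D\<^sub>j\<close> were null, every kernel \<open>K\<^sub>h\<^sub>j\<close> would fall back to the value
  \<open>1/|D\<^sub>j| = 0\<close> and \<open>p\<^sup>D\<close> would vanish at each observation, contradicting its lower bound.\<close>

lemma D_pos:
  assumes j: "j \<in> {1..d}" shows "0 < emeasure (lebL L j) (D j)"
proof (rule ccontr)
  assume "\<not> 0 < emeasure (lebL L j) (D j)"
  then have null: "emeasure (lebL L j) (D j) = 0" by (simp add: zero_less_iff_neq_zero)
  then have "D j \<in> null_sets (lebL L j)" using D_sets[OF j] by (simp add: null_sets_def)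
  then have not_in: "AE t in lebL L j. t \<notin> D j" by (rule AE_not_in)
  have kern_zero: "kern j i t = 0" for i t
  proof -
    have "AE t in lebL L j. indicator (D j) t *\<^sub>R (K j (distL L j t (\<xi> i j) / h j) / h j ^ L j) = (0::real)"
      using not_in by eventually_elim simp
    then have "(LINT t:D j|lebL L j. K j (distL L j t (\<xi> i j) / h j) / h j ^ L j) = 0"
      unfolding set_lebesgue_integral_def by (rule integral_eq_zero_AE)
    moreover have "measure (lebL L j) (D j) = 0" using null by (simp add: measure_def)
    ultimately show ?thesis unfolding kern_def sbf_Kh_def Let_def by simp
  qed
  obtain i0 where i0: "i0 \<in> obs" using obs_nonempty by blast
  then have x0: "\<forall>m\<in>{1..d}. \<xi> i0 m \<in> D m" unfolding obs_def sbf_inD_def by blast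
  have prod_zero: "(\<Prod>m\<in>{1..d}. kern m i (\<xi> i0 m)) = 0" for i
    using j kern_zero by (intro prod_zero) (auto intro!: bexI[where x=j])
  have "sbf_p L D h K d n \<xi> (\<xi> i0) = 0"
    unfolding sbf_p_eq by (simp only: prod_zero sum.neutral_const mult_zero_right)
  with x0 p_bounded show False by force
qed

lemma space_dom_measure: "k \<in> {1..d} \<Longrightarrow> space (dom_measure k) = D k"
  using D_sub unfolding dom_measure_def space_restrict_space space_lebL by blast

lemma set_integral_eq_dom_measure:
  fixes g :: "(nat \<Rightarrow> real) \<Rightarrow> 'h::{banach,second_countable_topology}"
  shows "k \<in> {1..d} \<Longrightarrow> (LINT t:D k|lebL L k. g t) = integral\<^sup>L (dom_measure k) g"
  unfolding set_lebesgue_integral_def dom_measure_def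
  by (rule integral_restrict_space[symmetric]) (simp add: D_sets)

lemma nn_set_integral_eq_dom_measure:
  "k \<in> {1..d} \<Longrightarrow> (\<integral>\<^sup>+ t \<in> D k. g t \<partial>lebL L k) = (\<integral>\<^sup>+ t. g t \<partial>dom_measure k)"
  unfolding dom_measure_def by (simp add: nn_integral_restrict_space D_sets)

lemma finite_dom_measure:
  assumes k: "k \<in> {1..d}" shows "finite_measure (dom_measure k)"
proof (rule finite_measureI)
  have "emeasure (dom_measure k) (space (dom_measure k)) = emeasure (lebL L k) (D k)"
    unfolding space_dom_measure[OF k] unfolding dom_measure_def
    by (rule emeasure_restrict_space) (simp_all add: D_sets[OF k])
  then show "emeasure (dom_measure k) (space (dom_measure k)) \<noteq> \<infinity>" using D_finite[OF k] by simp
qed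

lemma kern_measurable: "k \<in> {1..d} \<Longrightarrow> kern k i \<in> borel_measurable (dom_measure k)"
  unfolding dom_measure_def kern_def using h_pos K_cont
  by (intro measurable_restrict_space1 borel_measurable_sbf_Kh) auto

lemma kern_nonneg: "k \<in> {1..d} \<Longrightarrow> 0 \<le> kern k i t"
  unfolding kern_def using h_pos K_nonneg by (intro sbf_Kh_nonneg) auto

lemma integral_kern: "k \<in> {1..d} \<Longrightarrow> integral\<^sup>L (dom_measure k) (kern k i) = 1"
  unfolding dom_measure_def kern_def using D_sets D_pos D_finite by (intro integral_sbf_Kh) auto

lemma kern_bounded: "\<exists>B. \<forall>k\<in>{1..d}. \<forall>i\<in>obs. \<forall>t\<in>space (dom_measure k). kern k i t \<le> B"
proof -
  have "\<forall>ki\<in>{1..d} \<times> obs. \<exists>B. \<forall>t. kern (fst ki) (snd ki) t \<le> B"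
    unfolding kern_def using h_pos K_cont K_nonneg K_zero by (auto intro!: sbf_Kh_bounded)
  then obtain B where B: "\<And>ki t. ki \<in> {1..d} \<times> obs \<Longrightarrow> kern (fst ki) (snd ki) t \<le> B ki" by metis
  have "kern k i t \<le> Max (B ` ({1..d} \<times> obs))" if "k \<in> {1..d}" "i \<in> obs" for k i t
    using B[of "(k, i)" t] that finite_obs by (force intro: order_trans[OF _ Max_ge])
  then show ?thesis by blast
qed

lemma density_lower_bound:
  "\<exists>c>0. \<forall>x. (\<forall>k\<in>{1..d}. x k \<in> space (dom_measure k)) \<longrightarrow>
          c \<le> mass * (\<Sum>i\<in>obs. \<Prod>k\<in>{1..d}. kern k i (x k))"
  using p_bounded space_dom_measure by (auto simp: sbf_p_eq)

sublocale backfitting_kernels d obs dom_measure kern mass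
  by (rule backfitting_kernels.intro) (fact kern_bounded density_lower_bound |
      simp add: finite_obs obs_nonempty mass_pos finite_dom_measure kern_measurable kern_nonneg integral_kern)+

lemma sbf_p1_eq_marginal: "sbf_p1 L D h K d n \<xi> j t = marginal j t"
  unfolding sbf_p1_eq marginal_def ..

lemma sbf_proj_eq_blend:
  fixes g :: "(nat \<Rightarrow> real) \<Rightarrow> 'h::{real_inner,banach,second_countable_topology}"
  assumes k: "k \<in> {1..d}" and g: "square_integrable k g"
  shows "sbf_proj L D h K d n \<xi> j k g x = blend j (\<lambda>i. local_mean k i g) x"
proof -
  have "sbf_p2 L D h K d n \<xi> j k x t / sbf_p1 L D h K d n \<xi> j x = (\<Sum>i\<in>obs. weight j i x * kern k i t)" for t
    unfolding sbf_p2_eq sbf_p1_eq_marginal weight_def by (simp add: sum_divide_distrib sum_distrib_left mult.assoc)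
  then have "sbf_proj L D h K d n \<xi> j k g x = integral\<^sup>L (dom_measure k) (\<lambda>t. \<Sum>i\<in>obs. weight j i x *\<^sub>R (kern k i t *\<^sub>R g t))"
    unfolding sbf_proj_def set_integral_eq_dom_measure[OF k] by (simp add: scaleR_sum_left)
  also have "\<dots> = (\<Sum>i\<in>obs. integral\<^sup>L (dom_measure k) (\<lambda>t. weight j i x *\<^sub>R (kern k i t *\<^sub>R g t)))"
    using integrable_kernel_scaleR[OF k _ g] by (intro Bochner_Integration.integral_sum integrable_scaleR_right)
  also have "\<dots> = (\<Sum>i\<in>obs. weight j i x *\<^sub>R local_mean k i g)"
    unfolding local_mean_def by (intro sum.cong refl integral_scaleR_right)
  finally show ?thesis unfolding blend_def .
qed

lemma sbf_constraint_square_integrable: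
  fixes g :: "(nat \<Rightarrow> real) \<Rightarrow> 'h::{real_inner,banach,second_countable_topology}"
  assumes j: "j \<in> {1..d}" and g: "sbf_constraint L D h K d n \<xi> j g"
  shows "square_integrable j g"
proof -
  obtain c where c: "0 < c" and lower: "\<And>t. t \<in> D j \<Longrightarrow> c \<le> marginal j t"
    using marginal_lower_bound space_dom_measure[OF j] j by metis
  have g_meas [measurable]: "g \<in> borel_measurable (lebL L j)" using g unfolding sbf_constraint_def by blast
  have [measurable]: "g \<in> borel_measurable (dom_measure j)"
    unfolding dom_measure_def by (rule measurable_restrict_space1[OF g_meas])
  have [measurable]: "kern j i \<in> borel_measurable (lebL L j)" for i
    unfolding kern_def using j h_pos K_cont by (intro borel_measurable_sbf_Kh) auto
  have [measurable]: "D j \<in> sets (lebL L j)" by (rule D_sets[OF j])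
  have "(\<integral>\<^sup>+ t. ennreal ((norm (g t))\<^sup>2) \<partial>dom_measure j)
      \<le> (\<integral>\<^sup>+ t \<in> D j. ennreal (1 / c) * ennreal ((norm (g t))\<^sup>2 * sbf_p1 L D h K d n \<xi> j t) \<partial>lebL L j)"
    unfolding nn_set_integral_eq_dom_measure[OF j, symmetric]
  proof (intro nn_integral_mono)
    fix t
    have "(norm (g t))\<^sup>2 \<le> 1 / c * ((norm (g t))\<^sup>2 * marginal j t)" if "t \<in> D j"
      using mult_right_mono[OF lower[OF that], of "(norm (g t))\<^sup>2"] c by (simp add: field_simps)
    then show "ennreal ((norm (g t))\<^sup>2) * indicator (D j) t
        \<le> ennreal (1 / c) * ennreal ((norm (g t))\<^sup>2 * sbf_p1 L D h K d n \<xi> j t) * indicator (D j) t"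
      using c by (cases "t \<in> D j") (auto simp: sbf_p1_eq_marginal ennreal_mult'[symmetric] ennreal_leI)
  qed
  also have "\<dots> = ennreal (1 / c) * (\<integral>\<^sup>+ t \<in> D j. ennreal ((norm (g t))\<^sup>2 * sbf_p1 L D h K d n \<xi> j t) \<partial>lebL L j)"
  proof -
    have "(\<lambda>t. ennreal ((norm (g t))\<^sup>2 * sbf_p1 L D h K d n \<xi> j t) * indicator (D j) t) \<in> borel_measurable (lebL L j)"
      unfolding sbf_p1_eq by measurable
    from nn_integral_cmult[OF this, of "ennreal (1 / c)"] show ?thesis by (simp add: mult.assoc)
  qed
  also have "\<dots> < \<infinity>" using g unfolding sbf_constraint_def by (simp add: ennreal_mult_less_top)
  finally have "integrable (dom_measure j) (\<lambda>t. (norm (g t))\<^sup>2)" by (intro integrableI_bounded) simp_all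
  then show ?thesis unfolding square_integrable_def by simp
qed

lemma sbf_constraint_centered:
  fixes g :: "(nat \<Rightarrow> real) \<Rightarrow> 'h::{real_inner,banach,second_countable_topology}"
  assumes j: "j \<in> {1..d}" and g: "sbf_constraint L D h K d n \<xi> j g"
  shows "centered j g"
proof -
  have sq: "square_integrable j g" by (rule sbf_constraint_square_integrable[OF j g])
  have "0 = integral\<^sup>L (dom_measure j) (\<lambda>t. marginal j t *\<^sub>R g t)"
    using g unfolding sbf_constraint_def sbf_p1_eq_marginal set_integral_eq_dom_measure[OF j] by simp
  also have "\<dots> = (\<Sum>i\<in>obs. integral\<^sup>L (dom_measure j) (\<lambda>t. mass *\<^sub>R (kern j i t *\<^sub>R g t)))"
    unfolding marginal_def scaleR_scaleR[symmetric] sum_distrib_left scaleR_sum_left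
    using integrable_kernel_scaleR[OF j _ sq] by (intro Bochner_Integration.integral_sum integrable_scaleR_right)
  also have "\<dots> = mass *\<^sub>R (\<Sum>i\<in>obs. local_mean j i g)"
    unfolding local_mean_def scaleR_sum_right by (intro sum.cong refl integral_scaleR_right)
  finally show ?thesis unfolding centered_def using mass_pos by simp
qed

lemma sbf_constraint_admissible:
  fixes f :: "nat \<Rightarrow> (nat \<Rightarrow> real) \<Rightarrow> 'h::{real_inner,banach,second_countable_topology}"
  shows "\<forall>j\<in>{1..d}. sbf_constraint L D h K d n \<xi> j (f j) \<Longrightarrow> admissible f"
  unfolding admissible_def using sbf_constraint_square_integrable sbf_constraint_centered by blast

lemma sbf_error_recursion:
  fixes f :: "nat \<Rightarrow> (nat \<Rightarrow> real) \<Rightarrow> 'h::{real_inner,banach,second_countable_topology}"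
    and F :: "nat \<Rightarrow> nat \<Rightarrow> (nat \<Rightarrow> real) \<Rightarrow> 'h" and Y :: "nat \<Rightarrow> 'h"
  assumes f: "admissible f"
    and f_sol: "\<forall>j\<in>{1..d}. \<forall>x\<in>D j.
        f j x = sbf_m L D h K d n \<xi> Y j x - sbf_f0 d n D \<xi> Y
                - (\<Sum>k\<in>{1..d} - {j}. sbf_proj L D h K d n \<xi> j k (f k) x)"
    and F_iter: "\<forall>r\<ge>1. \<forall>j\<in>{1..d}. \<forall>x\<in>D j.
        F r j x = sbf_m L D h K d n \<xi> Y j x - sbf_f0 d n D \<xi> Y
                - (\<Sum>k\<in>{1..<j}. sbf_proj L D h K d n \<xi> j k (F r k) x)
                - (\<Sum>k\<in>{j<..d}. sbf_proj L D h K d n \<xi> j k (F (r - 1) k) x)"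
    and j: "j \<in> {1..d}" and x: "x \<in> D j"
    and before: "\<And>k. k \<in> {1..<j} \<Longrightarrow> square_integrable k (F (Suc r) k)"
    and after: "\<And>k. k \<in> {j<..d} \<Longrightarrow> square_integrable k (F r k)"
  shows "F (Suc r) j x - f j x = blend j (\<lambda>i. - ((\<Sum>k\<in>{1..<j}. local_mean k i (\<lambda>t. F (Suc r) k t - f k t))
                                        + (\<Sum>k\<in>{j<..d}. local_mean k i (\<lambda>t. F r k t - f k t)))) x"
proof -
  let ?pr = "sbf_proj L D h K d n \<xi> j"
  have proj_diff: "?pr k (F s k) x - ?pr k (f k) x = blend j (\<lambda>i. local_mean k i (\<lambda>t. F s k t - f k t)) x"
    if k: "k \<in> {1..d}" and sq: "square_integrable k (F s k)" for k s
  proof -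
    have fk: "square_integrable k (f k)" using f k by (rule admissible_square_integrable)
    show ?thesis unfolding sbf_proj_eq_blend[OF k sq] sbf_proj_eq_blend[OF k fk] blend_diff
      by (rule blend_cong) (simp add: local_mean_diff[OF k _ sq fk])
  qed
  have eF: "F (Suc r) j x = sbf_m L D h K d n \<xi> Y j x - sbf_f0 d n D \<xi> Y
      - (\<Sum>k\<in>{1..<j}. ?pr k (F (Suc r) k) x) - (\<Sum>k\<in>{j<..d}. ?pr k (F r k) x)"
    using F_iter j x by fastforce
  have ef: "f j x = sbf_m L D h K d n \<xi> Y j x - sbf_f0 d n D \<xi> Y
      - (\<Sum>k\<in>{1..<j}. ?pr k (f k) x) - (\<Sum>k\<in>{j<..d}. ?pr k (f k) x)"
  proof -
    have "f j x = sbf_m L D h K d n \<xi> Y j x - sbf_f0 d n D \<xi> Y - (\<Sum>k\<in>{1..d} - {j}. ?pr k (f k) x)"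
      using f_sol j x by blast
    then show ?thesis unfolding sum_atLeastAtMost_remove_split[OF j] by (simp add: algebra_simps)
  qed
  have "F (Suc r) j x - f j x = - ((\<Sum>k\<in>{1..<j}. ?pr k (F (Suc r) k) x - ?pr k (f k) x)
      + (\<Sum>k\<in>{j<..d}. ?pr k (F r k) x - ?pr k (f k) x))"
    unfolding eF ef by (simp add: sum_subtractf algebra_simps)
  also have "\<dots> = - ((\<Sum>k\<in>{1..<j}. blend j (\<lambda>i. local_mean k i (\<lambda>t. F (Suc r) k t - f k t)) x)
      + (\<Sum>k\<in>{j<..d}. blend j (\<lambda>i. local_mean k i (\<lambda>t. F r k t - f k t)) x))"
    using proj_diff before after j by simp
  also have "\<dots> = blend j (\<lambda>i. - ((\<Sum>k\<in>{1..<j}. local_mean k i (\<lambda>t. F (Suc r) k t - f k t))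
      + (\<Sum>k\<in>{j<..d}. local_mean k i (\<lambda>t. F r k t - f k t)))) x"
    by (simp only: blend_sum finite_atLeastLessThan finite_greaterThanAtMost blend_add blend_uminus)
  finally show ?thesis .
qed

lemma sbf_iterates_square_integrable:
  fixes f :: "nat \<Rightarrow> (nat \<Rightarrow> real) \<Rightarrow> 'h::{real_inner,banach,second_countable_topology}"
    and F :: "nat \<Rightarrow> nat \<Rightarrow> (nat \<Rightarrow> real) \<Rightarrow> 'h" and Y :: "nat \<Rightarrow> 'h"
  assumes f: "admissible f" and F0: "admissible (F 0)"
    and f_sol: "\<forall>j\<in>{1..d}. \<forall>x\<in>D j.
        f j x = sbf_m L D h K d n \<xi> Y j x - sbf_f0 d n D \<xi> Y
                - (\<Sum>k\<in>{1..d} - {j}. sbf_proj L D h K d n \<xi> j k (f k) x)"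
    and F_iter: "\<forall>r\<ge>1. \<forall>j\<in>{1..d}. \<forall>x\<in>D j.
        F r j x = sbf_m L D h K d n \<xi> Y j x - sbf_f0 d n D \<xi> Y
                - (\<Sum>k\<in>{1..<j}. sbf_proj L D h K d n \<xi> j k (F r k) x)
                - (\<Sum>k\<in>{j<..d}. sbf_proj L D h K d n \<xi> j k (F (r - 1) k) x)"
  shows "k \<in> {1..d} \<Longrightarrow> square_integrable k (F r k)"
proof (induction r arbitrary: k)
  case 0
  then show ?case by (rule admissible_square_integrable[OF F0])
next
  case (Suc r)
  show ?case using Suc.prems
  proof (induction k rule: less_induct)
    case (less j)
    let ?v = "\<lambda>i. - ((\<Sum>k\<in>{1..<j}. local_mean k i (\<lambda>t. F (Suc r) k t - f k t))
                     + (\<Sum>k\<in>{j<..d}. local_mean k i (\<lambda>t. F r k t - f k t)))"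
    have eq: "F (Suc r) j x = f j x + blend j ?v x" if "x \<in> space (dom_measure j)" for x
      using sbf_error_recursion[OF f f_sol F_iter less.prems, of x r] that less Suc.IH
      by (simp add: space_dom_measure[OF less.prems] algebra_simps)
    have "square_integrable j (\<lambda>x. f j x + blend j ?v x)"
      using f less.prems by (intro square_integrable_add square_integrable_blend admissible_square_integrable)
    then show ?case by (rule square_integrable_cong) (rule eq)
  qed
qed

theorem sbf_errors_geometric:
  fixes f :: "nat \<Rightarrow> (nat \<Rightarrow> real) \<Rightarrow> 'h::{real_inner,banach,second_countable_topology}"
    and F :: "nat \<Rightarrow> nat \<Rightarrow> (nat \<Rightarrow> real) \<Rightarrow> 'h" and Y :: "nat \<Rightarrow> 'h"
  assumes f_constr: "\<forall>j\<in>{1..d}. sbf_constraint L D h K d n \<xi> j (f j)"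
    and f_sol: "\<forall>j\<in>{1..d}. \<forall>x\<in>D j.
        f j x = sbf_m L D h K d n \<xi> Y j x - sbf_f0 d n D \<xi> Y
                - (\<Sum>k\<in>{1..d} - {j}. sbf_proj L D h K d n \<xi> j k (f k) x)"
    and F0_constr: "\<forall>j\<in>{1..d}. sbf_constraint L D h K d n \<xi> j (F 0 j)"
    and F_iter: "\<forall>r\<ge>1. \<forall>j\<in>{1..d}. \<forall>x\<in>D j.
        F r j x = sbf_m L D h K d n \<xi> Y j x - sbf_f0 d n D \<xi> Y
                - (\<Sum>k\<in>{1..<j}. sbf_proj L D h K d n \<xi> j k (F r k) x)
                - (\<Sum>k\<in>{j<..d}. sbf_proj L D h K d n \<xi> j k (F (r - 1) k) x)"
  obtains C \<rho> where "0 < C" "0 < \<rho>" "\<rho> < 1"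
    and "\<And>j r. j \<in> {1..d} \<Longrightarrow>
           (\<integral>\<^sup>+ x \<in> D j. ennreal ((norm (F r j x - f j x))\<^sup>2) \<partial>lebL L j) \<le> ennreal (C * \<rho> ^ r)"
    and "\<And>j r x. j \<in> {1..d} \<Longrightarrow> x \<in> D j \<Longrightarrow> norm (F (Suc r) j x - f j x) \<le> C * \<rho> ^ r"
proof -
  define G where "G r k t = F r k t - f k t" for r k t
  have f: "admissible f" and F0: "admissible (F 0)"
    using f_constr F0_constr by (simp_all add: sbf_constraint_admissible)
  have F: "\<And>r k. k \<in> {1..d} \<Longrightarrow> square_integrable k (F r k)"
    by (rule sbf_iterates_square_integrable[OF f F0 f_sol F_iter])
  have G0: "admissible (G 0)" unfolding G_def using admissible_diff[OF F0 f] .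
  have sw: "sweep (G r) (G (Suc r))" for r
    unfolding sweep_def G_def using sbf_error_recursion[OF f f_sol F_iter] F space_dom_measure by auto
  obtain C \<rho> where C: "0 < C" and \<rho>: "0 < \<rho>" "\<rho> < 1"
    and norm2: "\<And>r j. j \<in> {1..d} \<Longrightarrow> marginal_norm2 j (G r j) \<le> C * \<rho> ^ r"
    and sup: "\<And>r j t. j \<in> {1..d} \<Longrightarrow> t \<in> space (dom_measure j) \<Longrightarrow> norm (G (Suc r) j t) \<le> C * \<rho> ^ r"
    using sweep_geometric_convergence[OF G0 sw] by blast
  obtain c where c: "0 < c" and lower: "\<And>j t. j \<in> {1..d} \<Longrightarrow> t \<in> space (dom_measure j) \<Longrightarrow> c \<le> marginal j t"
    using marginal_lower_bound by blast
  define C' where "C' = C / min c 1"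
  have C': "C \<le> C'" "C / c \<le> C'" unfolding C'_def using C c by (auto simp: field_simps min_def)
  show thesis
  proof
    show "0 < C'" using C' C by linarith
    show "0 < \<rho>" "\<rho> < 1" by (fact \<rho>)+
    fix j r assume j: "j \<in> {1..d}"
    have sqG: "square_integrable j (G r j)"
      unfolding G_def by (rule square_integrable_diff[OF F[OF j] admissible_square_integrable[OF f j]])
    have "c * (\<integral>x. (norm (G r j x))\<^sup>2 \<partial>dom_measure j) \<le> marginal_norm2 j (G r j)"
      by (rule integral_norm2_le_marginal_norm2[OF j sqG]) (rule lower[OF j])
    then have "c * (\<integral>x. (norm (G r j x))\<^sup>2 \<partial>dom_measure j) \<le> C * \<rho> ^ r"
      using norm2[OF j, of r] by linarith
    then have "(\<integral>x. (norm (G r j x))\<^sup>2 \<partial>dom_measure j) \<le> C / c * \<rho> ^ r"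
      using c by (simp add: field_simps mult.commute)
    also have "\<dots> \<le> C' * \<rho> ^ r" using C'(2) \<rho> by (intro mult_right_mono) auto
    finally have "(\<integral>x. (norm (G r j x))\<^sup>2 \<partial>dom_measure j) \<le> C' * \<rho> ^ r" .
    moreover have "(\<integral>\<^sup>+ x \<in> D j. ennreal ((norm (F r j x - f j x))\<^sup>2) \<partial>lebL L j)
        = ennreal (\<integral>x. (norm (G r j x))\<^sup>2 \<partial>dom_measure j)"
      unfolding nn_set_integral_eq_dom_measure[OF j] G_def using sqG
      by (intro nn_integral_eq_integral) (auto simp: square_integrable_def G_def)
    ultimately show "(\<integral>\<^sup>+ x \<in> D j. ennreal ((norm (F r j x - f j x))\<^sup>2) \<partial>lebL L j) \<le> ennreal (C' * \<rho> ^ r)"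
      by (simp add: ennreal_leI)
    fix x assume "x \<in> D j"
    then have "norm (F (Suc r) j x - f j x) \<le> C * \<rho> ^ r"
      using sup[OF j] space_dom_measure[OF j] unfolding G_def by blast
    then show "norm (F (Suc r) j x - f j x) \<le> C' * \<rho> ^ r"
      using C' \<rho> by (meson order_trans mult_right_mono zero_le_power less_imp_le)
  qed
qed

end

theorem lemmaS18:
  fixes L :: "nat \<Rightarrow> nat" and D :: "nat \<Rightarrow> (nat \<Rightarrow> real) set" and d n :: nat
    and \<xi> :: "nat \<Rightarrow> nat \<Rightarrow> nat \<Rightarrow> real" and Y :: "nat \<Rightarrow> 'h::{real_inner,banach,second_countable_topology}"
    and h :: "nat \<Rightarrow> real" and K :: "nat \<Rightarrow> real \<Rightarrow> real"
    and f :: "nat \<Rightarrow> (nat \<Rightarrow> real) \<Rightarrow> 'h"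
    and F :: "nat \<Rightarrow> nat \<Rightarrow> (nat \<Rightarrow> real) \<Rightarrow> 'h"
  assumes D_sub: "\<forall>j\<in>{1..d}. D j \<subseteq> {..<L j} \<rightarrow>\<^sub>E UNIV"
    and D_compact: "\<forall>j\<in>{1..d}. compact (D j)"
    and h_pos: "\<forall>j\<in>{1..d}. h j > 0"
    and K_cont: "\<forall>j\<in>{1..d}. continuous_on {0..} (K j)"
    and K_nonneg: "\<forall>j\<in>{1..d}. \<forall>t\<ge>0. K j t \<ge> 0"
    and K_pos: "\<forall>j\<in>{1..d}. \<forall>t. 0 \<le> t \<and> t < 1 \<longrightarrow> K j t > 0"
    and K_zero: "\<forall>j\<in>{1..d}. \<forall>t\<ge>1. K j t = 0"
    and xi_sub: "\<forall>i<n. \<forall>j\<in>{1..d}. \<xi> i j \<in> {..<L j} \<rightarrow>\<^sub>E UNIV"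
    and p0_pos: "sbf_p0 d n D \<xi> > 0"
    and p_bounded: "\<exists>c C. 0 < c \<and> (\<forall>x. (\<forall>j\<in>{1..d}. x j \<in> D j) \<longrightarrow>
                        c \<le> sbf_p L D h K d n \<xi> x \<and> sbf_p L D h K d n \<xi> x \<le> C)"
    and f_constr: "\<forall>j\<in>{1..d}. sbf_constraint L D h K d n \<xi> j (f j)"
    and f_sol: "\<forall>j\<in>{1..d}. \<forall>x\<in>D j.
        f j x = sbf_m L D h K d n \<xi> Y j x - sbf_f0 d n D \<xi> Y
                - (\<Sum>k\<in>{1..d} - {j}. sbf_proj L D h K d n \<xi> j k (f k) x)"
    and F0_constr: "\<forall>j\<in>{1..d}. sbf_constraint L D h K d n \<xi> j (F 0 j)"
    and F_iter: "\<forall>r\<ge>1. \<forall>j\<in>{1..d}. \<forall>x\<in>D j.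
        F r j x = sbf_m L D h K d n \<xi> Y j x - sbf_f0 d n D \<xi> Y
                - (\<Sum>k\<in>{1..<j}. sbf_proj L D h K d n \<xi> j k (F r k) x)
                - (\<Sum>k\<in>{j<..d}. sbf_proj L D h K d n \<xi> j k (F (r - 1) k) x)"
  shows "(\<exists>c2 \<rho>2. c2 > 0 \<and> 0 < \<rho>2 \<and> \<rho>2 < 1 \<and>
            (\<forall>j\<in>{1..d}. \<forall>r.
               (\<integral>\<^sup>+ x \<in> D j. ennreal ((norm (F r j x - f j x))\<^sup>2) \<partial>lebL L j) \<le> ennreal (c2 * \<rho>2 ^ r)))
       \<and> (\<forall>j\<in>{1..d}. AE x in lebL L j. x \<in> D j \<longrightarrow>
               (\<lambda>r. norm (F r j x - f j x)) \<longlonglongrightarrow> 0)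
       \<and> (\<forall>j\<in>{1..d}. \<forall>\<epsilon>>0. \<exists>S. S \<in> sets (lebL L j) \<and> S \<subseteq> D j \<and>
               emeasure (lebL L j) (D j - S) < ennreal \<epsilon> \<and>
               uniform_limit S (\<lambda>r. F r j) (f j) sequentially)"
proof -
  interpret sbf_estimator L D d n \<xi> h K
    by (rule sbf_estimator.intro) (fact D_sub D_compact h_pos K_cont K_nonneg K_zero p0_pos p_bounded)+
  obtain C \<rho> where C: "0 < C" and \<rho>: "0 < \<rho>" "\<rho> < 1"
    and L2: "\<And>j r. j \<in> {1..d} \<Longrightarrow>
               (\<integral>\<^sup>+ x \<in> D j. ennreal ((norm (F r j x - f j x))\<^sup>2) \<partial>lebL L j) \<le> ennreal (C * \<rho> ^ r)"
    and sup: "\<And>j r x. j \<in> {1..d} \<Longrightarrow> x \<in> D j \<Longrightarrow> norm (F (Suc r) j x - f j x) \<le> C * \<rho> ^ r"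
    using sbf_errors_geometric[OF f_constr f_sol F0_constr F_iter] by blast
  have unif: "uniform_limit (D j) (\<lambda>r. F r j) (f j) sequentially" if j: "j \<in> {1..d}" for j
    using \<rho> sup[OF j] by (intro uniform_limit_geometric) (auto simp: dist_norm)
  have "(\<lambda>r. norm (F r j x - f j x)) \<longlonglongrightarrow> 0" if "j \<in> {1..d}" "x \<in> D j" for j x
    using tendsto_uniform_limitI[OF unif[OF that(1)] that(2)] by (simp add: LIM_zero tendsto_norm_zero_iff)
  then show ?thesis
    using C \<rho> L2 unif D_sets by (intro conjI) (blast, auto intro!: AE_I2 exI[of _ "D _"])
qed

end
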